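(* Consider the power network model described in the context (linearized power flows), and suppose that each $f_i$ is continuously differentiable and there exist constants $\mu>0$ and $L>0$ such that $-L\le \frac{1}{M_i}f_i'(w)\le-\mu$ for all $i\in\mathcal N$, $w\in\mathbb R$. Let $$K:=\frac{32\,N M_b\,(1+\frac{L}{\mu})^2}{(\min_{i}M_i)\,\mu^2},\qquad c:=\frac{\mu\lambda_2}{4(\lambda_2+4L^2)} .$$ Suppose the initial state $(\omega(0),\theta(0))$ satisfies the steady-state equations $$0=f_i(\omega_i(0))+\xi_i(0_-)-\sum_{j\in\mathcal N_i}B_{ij}(\theta_i(0)-\theta_j(0))\ \ \forall i\in\mathcal N,\qquad 0=\omega_i(0)-\omega_j(0)\ \ \forall\{i,j\}\in\mathcal E.$$ If $C:=\max_{i\in\mathcal N}\sup_{t>0}|\dot\xi_i(t)|/M_i$ is finite, then for all $t>0$, $$\max_{i\in\mathcal N}|\omega_i(t)-\omega_b(t)|^2\le \alpha^*|\Delta\xi|^2e^{-ct}+KC^2\frac{(\lambda_2+4L^2)^2}{\lambda_2^3},$$ where $\Delta\xi:=\xi(0_+)-\xi(0_-)\in\mathbb R^N$ and $$\alpha^*:=\frac{(\phi_1+\phi_2)\lambda_2+4\phi_2L^2}{\lambda_2^2},\qquad \phi_1:=\frac{1}{\min_iM_i^2},\qquad \phi_2:=\frac{16L^2}{3\mu^2M_b(\min_iM_i)} .$$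
   Context: Let $(\mathcal N,\mathcal E)$ be a connected undirected graph with node set $\mathcal N=\{1,\dots,N\}$; $\mathcal N_i$ denotes the set of neighbors of node $i$. Each node $i$ has $M_i>0$ and a function $f_i:\mathbb R\to\mathbb R$ with $f_i(0)=0$; each edge $\{i,j\}$ has a weight $B_{ij}=B_{ji}>0$. The disturbances $\xi_i(t)$ are continuously differentiable on $(0,\infty)$ and may jump at $t=0$: $\xi_i(0_-)$ is the value before time $0$ and $\xi_i(0_+)=\lim_{t\to0^+}\xi_i(t)$; $\xi=(\xi_1,\dots,\xi_N)^T$. The nodal dynamics are $$\dot\theta_i=\omega_i,\qquad M_i\dot\omega_i=f_i(\omega_i)+\xi_i(t)-\sum_{j\in\mathcal N_i}B_{ij}(\theta_i-\theta_j).$$ $M=\mathrm{diag}(M_i)$, $M_b=\frac1N\sum_iM_i$, $f_b(w)=\frac1N\sum_if_i(w)$, $\xi_b=\frac1N\sum_i\xi_i$. The blended dynamics is $M_b\dot\omega_b=f_b(\omega_b)+\xi_b(t)$ with $\omega_b(0)=\sum_iM_i\omega_i(0)/\sum_iM_i$. $L_B$ is the weighted graph Laplacian with off-diagonal entries $-B_{ij}$ and diagonal entries $\sum_{j\ne i}B_{ij}$; $\lambda_2$ is the second-smallest eigenvalue of $M^{-1}L_B$. $|\cdot|$ is the Euclidean norm. Statements "for $t>0$" start from $t=0_+$. *)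

theory Defs
  imports "HOL-Analysis.Analysis" "HOL-Library.Multiset"
begin

definition laplacian :: "('n::finite \<Rightarrow> 'n \<Rightarrow> bool) \<Rightarrow> ('n \<Rightarrow> 'n \<Rightarrow> real) \<Rightarrow> real^'n^'n" where
  "laplacian E B = (\<chi> i j. if i = j then (\<Sum>k\<in>{k. E i k}. B i k)
                             else if E i j then - B i j else 0)"

definition scaled_laplacian :: "('n::finite \<Rightarrow> real) \<Rightarrow> ('n \<Rightarrow> 'n \<Rightarrow> bool) \<Rightarrow> ('n \<Rightarrow> 'n \<Rightarrow> real) \<Rightarrow> real^'n^'n" where
  "scaled_laplacian M E B = (\<chi> i j. laplacian E B $ i $ j / M i)"

definition eigenvalues_mset :: "real^'n^'n \<Rightarrow> real multiset" where
  "eigenvalues_mset A = (THE S. \<forall>x. det (mat x - A) = (\<Prod>l\<in>#S. x - l))"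

text \<open>The k-th smallest eigenvalue (0-based index), counted with multiplicity.\<close>
definition kth_smallest_eigenvalue :: "real^'n^'n \<Rightarrow> nat \<Rightarrow> real" where
  "kth_smallest_eigenvalue A k = sorted_list_of_multiset (eigenvalues_mset A) ! k"

definition lambda2 :: "('n::finite \<Rightarrow> real) \<Rightarrow> ('n \<Rightarrow> 'n \<Rightarrow> bool) \<Rightarrow> ('n \<Rightarrow> 'n \<Rightarrow> real) \<Rightarrow> real" where
  "lambda2 M E B = kth_smallest_eigenvalue (scaled_laplacian M E B) 1"

end

(*
  Let omega_avg be the inertia-weighted mean frequency, dev_i = omega_i - omega_avg the
  deviation from it, gap = omega_avg - omega_b, and z_i = omega_i' + eps * dev_i.  Along
  solutions the function

    W = dev^T L_B dev / 2 + sum_i M_i z_i^2 / 2 + kappa * gap^2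

  satisfies W' <= - c W + F with F proportional to C^2.  The estimate uses the sector
  bounds on f_i' (through the mean value theorem, so continuity of f_i' and of the
  derivative of xi is never needed) and the Rayleigh bound
  lambda_2 * sum_i M_i dev_i^2 <= dev^T L_B dev, valid because sum_i M_i dev_i = 0; the
  latter comes from the spectral decomposition of the symmetric matrix
  M^(-1/2) L_B M^(-1/2), which is similar to M^(-1) L_B.  Gronwall's inequality gives
  W(t) <= W(0+) e^(-ct) + F/c, the steady-state initial condition makes
  W(0+) = sum_i (Delta xi_i)^2 / (2 M_i), and (omega_i - omega_b)^2 is bounded by a
  multiple of W.
*)

theory Submission
  imports Defs
begin

section \<open>Spectral theory of real symmetric matrices\<close>

lemma linear_coeff_eq_0_if_quadratic_nonpos:
  fixes a b :: real
  assumes "\<And>t. b * t + a * t\<^sup>2 \<le> 0"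
  shows "b = 0"
proof -
  define s where "s = 1 / (\<bar>a\<bar> + 1)"
  have s: "s > 0" "\<bar>a\<bar> * s < 1"
    by (simp_all add: s_def field_simps)
  have "1 + a * s > 0"
    using s abs_ge_minus_self[of a] mult_right_mono[of "- a" "\<bar>a\<bar>" s] by linarith
  moreover have "b\<^sup>2 * s * (1 + a * s) \<le> 0"
    using assms[of "b * s"] by (simp add: power2_eq_square algebra_simps)
  ultimately have "b\<^sup>2 \<le> 0"
    using s by (simp add: mult_le_0_iff zero_less_mult_iff)
  then show "b = 0" by simp
qed

lemma symmetric_matrix_inner:
  fixes S :: "real^'n^'n"
  assumes "transpose S = S"
  shows "x \<bullet> (S *v y) = (S *v x) \<bullet> y"
  by (metis assms dot_lmul_matrix vector_transpose_matrix)

lemma symmetric_matrix_maximiser_eigenvector: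
  fixes S :: "real^'n^'n"
  assumes symm: "transpose S = S"
    and W: "subspace W" and invariant: "\<And>w. w \<in> W \<Longrightarrow> S *v w \<in> W"
    and x: "x \<in> W" "x \<bullet> x = 1"
    and max: "\<And>y. y \<in> W \<Longrightarrow> y \<bullet> (S *v y) \<le> (x \<bullet> (S *v x)) * (y \<bullet> y)"
  shows "S *v x = (x \<bullet> (S *v x)) *\<^sub>R x"
proof -
  define lam where "lam = x \<bullet> (S *v x)"
  have stationary: "y \<bullet> (S *v x) = lam * (y \<bullet> x)" if y: "y \<in> W" for y
  proof -
    have "(2 * (y \<bullet> (S *v x) - lam * (y \<bullet> x))) * t + (y \<bullet> (S *v y) - lam * (y \<bullet> y)) * t\<^sup>2 \<le> 0"
      for t
    proof -
      have "x + t *\<^sub>R y \<in> W"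
        using W x y by (simp add: subspace_add subspace_scale)
      from max[OF this] show ?thesis
        using symmetric_matrix_inner[OF symm, of x y] x(2)
        by (simp add: lam_def matrix_vector_right_distrib matrix_vector_mult_scaleR
            inner_add_left inner_add_right inner_commute power2_eq_square algebra_simps)
    qed
    from linear_coeff_eq_0_if_quadratic_nonpos[OF this] show ?thesis by simp
  qed
  define r where "r = S *v x - lam *\<^sub>R x"
  have "r \<in> W"
    using W x invariant by (simp add: r_def subspace_diff subspace_scale)
  from stationary[OF this] have "r \<bullet> r = 0"
    by (simp add: r_def inner_diff_left inner_commute algebra_simps)
  then show ?thesis by (simp add: r_def lam_def)
qed

lemma quadratic_form_max_on_subspace:
  fixes S :: "real^'n^'n"
  assumes W: "subspace W" and "x1 \<in> W" "x1 \<noteq> 0"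
  obtains x where "x \<in> W" "x \<bullet> x = 1" "\<And>y. y \<in> W \<Longrightarrow> y \<bullet> (S *v y) \<le> (x \<bullet> (S *v x)) * (y \<bullet> y)"
proof -
  define K where "K = W \<inter> sphere 0 1"
  have "x1 /\<^sub>R norm x1 \<in> K"
    using W assms(2,3) by (simp add: K_def subspace_scale)
  moreover have "compact K"
    unfolding K_def using closed_subspace[OF W] by (simp add: closed_Int_compact)
  moreover have "continuous_on K (\<lambda>x. x \<bullet> (S *v x))"
    by (intro continuous_intros linear_continuous_on matrix_vector_mul_bounded_linear)
  ultimately obtain x where x: "x \<in> K"
    and max_K: "\<And>y. y \<in> K \<Longrightarrow> y \<bullet> (S *v y) \<le> x \<bullet> (S *v x)"
    using continuous_attains_sup[of K "\<lambda>x. x \<bullet> (S *v x)"] by blast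
  have "y \<bullet> (S *v y) \<le> (x \<bullet> (S *v x)) * (y \<bullet> y)" if "y \<in> W" for y
  proof (cases "y = 0")
    case False
    then have "y /\<^sub>R norm y \<in> K"
      using W \<open>y \<in> W\<close> by (simp add: K_def subspace_scale)
    from max_K[OF this] have "(y \<bullet> (S *v y)) / (norm y)\<^sup>2 \<le> x \<bullet> (S *v x)"
      by (simp add: matrix_vector_mult_scaleR power2_eq_square divide_inverse mult_ac)
    with False show ?thesis
      by (simp add: divide_le_eq power2_norm_eq_inner mult.commute)
  qed simp
  with x show thesis
    by (intro that) (auto simp: K_def norm_eq_1)
qed

text \<open>The eigenvector is a maximiser of the quadratic form on the unit sphere of the
  orthogonal complement of \<open>U\<close>, which is \<open>S\<close>-invariant.\<close>

lemma symmetric_matrix_eigenvector_orthogonal: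
  fixes S :: "real^'n^'n"
  assumes symm: "transpose S = S" and U: "finite U" "card U < CARD('n)"
    and eigen: "\<And>u. u \<in> U \<Longrightarrow> \<exists>d. S *v u = d *\<^sub>R u"
  obtains x where "x \<bullet> x = 1" "\<forall>u\<in>U. x \<bullet> u = 0" "\<exists>d. S *v x = d *\<^sub>R x"
proof -
  define W where "W = {x::real^'n. \<forall>u\<in>U. x \<bullet> u = 0}"
  have W: "subspace W"
    using subspace_orthogonal_to_vectors[of U]
    by (simp add: W_def orthogonal_def inner_commute)
  have invariant: "S *v w \<in> W" if "w \<in> W" for w
  proof -
    have "(S *v w) \<bullet> u = 0" if "u \<in> U" for u
      using eigen[OF that] \<open>w \<in> W\<close> that symmetric_matrix_inner[OF symm, of w u]
      by (auto simp: W_def)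
    then show ?thesis by (simp add: W_def)
  qed
  have "dim U < DIM(real^'n)"
    using U dim_le_card[of U U] span_superset[of U] by simp
  then obtain x1 where "x1 \<noteq> 0" "\<And>y. y \<in> span U \<Longrightarrow> orthogonal x1 y"
    using orthogonal_to_subspace_exists by blast
  then have "x1 \<in> W"
    by (auto simp: W_def orthogonal_def span_base)
  then obtain x where x: "x \<in> W" "x \<bullet> x = 1"
    and max: "\<And>y. y \<in> W \<Longrightarrow> y \<bullet> (S *v y) \<le> (x \<bullet> (S *v x)) * (y \<bullet> y)"
    using quadratic_form_max_on_subspace[OF W _ \<open>x1 \<noteq> 0\<close>] by blast
  have "S *v x = (x \<bullet> (S *v x)) *\<^sub>R x"
    by (rule symmetric_matrix_maximiser_eigenvector[OF symm W invariant x max])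
  with x show thesis
    by (intro that) (auto simp: W_def)
qed

lemma symmetric_matrix_orthonormal_eigenvectors:
  fixes S :: "real^'n^'n"
  assumes symm: "transpose S = S"
  shows "k \<le> CARD('n) \<Longrightarrow> \<exists>U. finite U \<and> card U = k
           \<and> (\<forall>u\<in>U. u \<bullet> u = 1 \<and> (\<exists>d. S *v u = d *\<^sub>R u))
           \<and> (\<forall>u\<in>U. \<forall>v\<in>U. u \<noteq> v \<longrightarrow> u \<bullet> v = 0)"
proof (induction k)
  case 0
  show ?case by (intro exI[of _ "{}"]) auto
next
  case (Suc k)
  then obtain U where U: "finite U" "card U = k" "\<forall>u\<in>U. u \<bullet> u = 1 \<and> (\<exists>d. S *v u = d *\<^sub>R u)"
      "\<forall>u\<in>U. \<forall>v\<in>U. u \<noteq> v \<longrightarrow> u \<bullet> v = 0"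
    by auto
  obtain x where x: "x \<bullet> x = 1" "\<forall>u\<in>U. x \<bullet> u = 0" "\<exists>d. S *v x = d *\<^sub>R x"
    using symmetric_matrix_eigenvector_orthogonal[OF symm U(1)] U Suc.prems by auto
  then have "x \<notin> U" by auto
  with U x show ?case
    by (intro exI[of _ "insert x U"]) (auto simp: inner_commute)
qed

lemma symmetric_matrix_orthonormal_eigenbasis:
  fixes S :: "real^'n^'n"
  assumes "transpose S = S"
  obtains p :: "'n \<Rightarrow> real^'n" and d :: "'n \<Rightarrow> real"
  where "\<And>k l. p k \<bullet> p l = (if k = l then 1 else 0)" "\<And>k. S *v p k = d k *\<^sub>R p k"
proof -
  obtain U where U: "finite U" "card U = CARD('n)" "\<forall>u\<in>U. u \<bullet> u = 1 \<and> (\<exists>d. S *v u = d *\<^sub>R u)"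
      "\<forall>u\<in>U. \<forall>v\<in>U. u \<noteq> v \<longrightarrow> u \<bullet> v = 0"
    using symmetric_matrix_orthonormal_eigenvectors[OF assms, of "CARD('n)"] by auto
  obtain p where p: "bij_betw p (UNIV::'n set) U"
    using finite_same_card_bij[of "UNIV::'n set" U] U by auto
  then have "p k \<in> U" and "p k = p l \<longleftrightarrow> k = l" for k l
    by (auto simp: bij_betw_def inj_eq)
  moreover obtain d where "\<And>u. u \<in> U \<Longrightarrow> S *v u = d u *\<^sub>R u"
    using U(3) by metis
  ultimately show thesis
    using U(3,4) by (intro that[of p "d \<circ> p"]) auto
qed

lemma orthonormal_family_expansion:
  fixes p :: "'n \<Rightarrow> real^'n"
  assumes on: "\<And>k l. p k \<bullet> p l = (if k = l then 1 else 0)"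
  shows "x = (\<Sum>k\<in>UNIV. (x \<bullet> p k) *\<^sub>R p k)"
proof -
  have "inj p"
    by (rule injI) (metis on zero_neq_one)
  then have "card (range p) = CARD('n)"
    by (simp add: card_image)
  moreover have "independent (range p)"
    by (rule pairwise_orthogonal_independent)
      (auto simp: pairwise_def orthogonal_def on, metis inner_zero_left on zero_neq_one)
  ultimately have span: "span (range p) = UNIV"
    using card_eq_dim[of "range p" UNIV] by (simp add: subset_antisym span_mono)
  define y where "y = x - (\<Sum>k\<in>UNIV. (x \<bullet> p k) *\<^sub>R p k)"
  have "y \<bullet> p l = 0" for l
    by (simp add: y_def inner_diff_left inner_sum_left on if_distrib cong: if_cong)
  then have "orthogonal y z" if "z \<in> span (range p)" for z
    using orthogonal_to_span[OF that] by (auto simp: orthogonal_def)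
  then have "y = 0"
    using span by (metis UNIV_I inner_eq_zero_iff orthogonal_def)
  then show ?thesis by (simp add: y_def)
qed

lemma orthonormal_family_parseval:
  fixes p :: "'n \<Rightarrow> real^'n"
  assumes "\<And>k l. p k \<bullet> p l = (if k = l then 1 else 0)"
  shows "x \<bullet> y = (\<Sum>k\<in>UNIV. (x \<bullet> p k) * (y \<bullet> p k))"
proof -
  have "x \<bullet> y = x \<bullet> (\<Sum>k\<in>UNIV. (y \<bullet> p k) *\<^sub>R p k)"
    by (rule arg_cong[OF orthonormal_family_expansion[OF assms]])
  then show ?thesis
    by (simp add: inner_sum_right mult.commute)
qed

lemma mat_matrix_mul:
  fixes A :: "real^'n^'n"
  shows "mat x ** A = x *\<^sub>R A" and "A ** mat x = x *\<^sub>R A"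
  by (simp_all add: vec_eq_iff matrix_matrix_mult_def mat_def if_distrib if_distribR cong: if_cong)

lemma diagonal_matrix_mult:
  fixes A :: "real^'n^'n"
  shows "((\<chi> i j. if i = j then a i else 0) ** A) $ i $ j = a i * A $ i $ j"
    and "(A ** (\<chi> i j. if i = j then a i else 0)) $ i $ j = A $ i $ j * a j"
  by (simp_all add: matrix_matrix_mult_def if_distrib if_distribR cong: if_cong)

lemma matrix_mul_diff_distrib:
  fixes A B C :: "real^'n^'n"
  shows "A ** (B - C) = A ** B - A ** C" and "(B - C) ** A = B ** A - C ** A"
  by (simp_all add: vec_eq_iff matrix_matrix_mult_def right_diff_distrib left_diff_distrib
      sum_subtractf)

lemma det_char_matrix_eigenbasis:
  fixes S :: "real^'n^'n" and p :: "'n \<Rightarrow> real^'n"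
  assumes on: "\<And>k l. p k \<bullet> p l = (if k = l then 1 else 0)"
    and eig: "\<And>k. S *v p k = d k *\<^sub>R p k"
  shows "det (mat x - S) = (\<Prod>k\<in>UNIV. x - d k)"
proof -
  define P :: "real^'n^'n" where "P = (\<chi> i k. p k $ i)"
  define D :: "real^'n^'n" where "D = (\<chi> i j. if i = j then x - d i else 0)"
  have "transpose P ** P = mat 1"
    using on by (simp add: vec_eq_iff P_def matrix_matrix_mult_def transpose_def mat_def
        inner_vec_def mult.commute)
  then have "det P * det P = 1"
    by (metis det_I det_mul det_transpose)
  then have "det P \<noteq> 0" by auto
  have "(S ** P) $ i $ k = d k * p k $ i" for i k
    using eig[of k] by (simp add: vec_eq_iff P_def matrix_vector_mult_def matrix_matrix_mult_def)
  moreover have "(P ** D) $ i $ k = (x - d k) * p k $ i" for i k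
    by (simp add: D_def diagonal_matrix_mult P_def mult.commute)
  ultimately have "(mat x - S) ** P = P ** D"
    by (simp add: vec_eq_iff matrix_mul_diff_distrib mat_matrix_mul P_def left_diff_distrib)
  then have "det (mat x - S) * det P = det P * det D"
    by (metis det_mul)
  with \<open>det P \<noteq> 0\<close> have "det (mat x - S) = det D" by simp
  also have "det D = (\<Prod>k\<in>UNIV. x - d k)"
    by (subst det_diagonal) (auto simp: D_def)
  finally show ?thesis .
qed

lemma prod_mset_linear_factors_inject:
  fixes S T :: "real multiset"
  assumes "\<And>x. (\<Prod>l\<in>#S. x - l) = (\<Prod>l\<in>#T. x - l)"
  shows "S = T"
  using assms
proof (induction S arbitrary: T)
  case empty
  show ?case
  proof (rule ccontr)
    assume "{#} \<noteq> T"
    then obtain a where "a \<in># T" by (metis multiset_nonemptyE)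
    then have "(\<Prod>l\<in>#T. a - l) = 0" by (auto simp: prod_mset_zero_iff)
    with empty[of a] show False by simp
  qed
next
  case (add a S)
  have "(\<Prod>l\<in>#T. a - l) = 0"
    using add.prems[of a] by simp
  then have "a \<in># T" by (auto simp: prod_mset_zero_iff)
  then obtain T' where T: "T = add_mset a T'"
    by (metis mset_add)
  have off_a: "(\<Prod>l\<in>#S. x - l) = (\<Prod>l\<in>#T'. x - l)" if "x \<noteq> a" for x
    using add.prems[of x] that by (simp add: T)
  have cont: "((\<lambda>x. \<Prod>l\<in>#R. x - l) \<longlongrightarrow> (\<Prod>l\<in>#R. a - l)) (at a)" for R :: "real multiset"
    by (induction R) (auto intro!: tendsto_intros)
  have "((\<lambda>x. \<Prod>l\<in>#S. x - l) \<longlongrightarrow> (\<Prod>l\<in>#T'. a - l)) (at a)"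
    using cont[of T'] by (rule Lim_transform_within[where d = 1]) (auto intro: off_a[symmetric])
  with cont[of S] have "(\<Prod>l\<in>#S. a - l) = (\<Prod>l\<in>#T'. a - l)"
    using tendsto_unique by (metis trivial_limit_at)
  with off_a have "(\<Prod>l\<in>#S. x - l) = (\<Prod>l\<in>#T'. x - l)" for x
    by (cases "x = a") auto
  then have "S = T'" by (rule add.IH)
  then show ?case by (simp add: T)
qed

lemma eigenvalues_mset_eqI:
  assumes "\<And>x. det (mat x - A) = (\<Prod>l\<in>#S. x - l)"
  shows "eigenvalues_mset A = S"
  unfolding eigenvalues_mset_def
  by (rule the_equality) (use assms prod_mset_linear_factors_inject in auto)

lemma eigenvalues_mset_eigenbasis:
  fixes S :: "real^'n^'n" and p :: "'n \<Rightarrow> real^'n"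
  assumes "\<And>k l. p k \<bullet> p l = (if k = l then 1 else 0)" "\<And>k. S *v p k = d k *\<^sub>R p k"
  shows "eigenvalues_mset S = image_mset d (mset_set UNIV)"
  by (rule eigenvalues_mset_eqI)
    (simp add: det_char_matrix_eigenbasis[OF assms] prod_unfold_prod_mset multiset.map_comp comp_def)

lemma eigenvalues_mset_similar:
  fixes A S D :: "real^'n^'n"
  assumes "det D \<noteq> 0" "D ** A = S ** D"
  shows "eigenvalues_mset A = eigenvalues_mset S"
proof -
  have "D ** (mat x - A) = (mat x - S) ** D" for x
    using assms(2) by (simp add: matrix_mul_diff_distrib mat_matrix_mul)
  then have "det D * det (mat x - A) = det (mat x - S) * det D" for x
    by (metis det_mul)
  with assms(1) have "det (mat x - A) = det (mat x - S)" for x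
    by simp
  then show ?thesis
    by (simp add: eigenvalues_mset_def)
qed

lemma sorted_list_of_multiset_add_min_nth_1:
  fixes R :: "'a::linorder multiset"
  assumes "R \<noteq> {#}" "\<forall>l\<in>#R. a \<le> l"
  shows "sorted_list_of_multiset (add_mset a R) ! 1 = Min_mset R"
proof -
  obtain y ys where xs: "sorted_list_of_multiset R = y # ys"
    by (metis assms(1) mset.simps(1) mset_sorted_list_of_multiset neq_Nil_conv)
  then have "sorted (y # ys)" "set (y # ys) = set_mset R"
    by (metis sorted_sorted_list_of_multiset, metis set_sorted_list_of_multiset)
  then have "y = Min_mset R" and "a \<le> y"
    using assms(2) by (auto intro!: Min_eqI[symmetric])
  moreover have "sorted_list_of_multiset (add_mset a R) = a # y # ys"
    using \<open>a \<le> y\<close> xs by simp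
  ultimately show ?thesis by simp
qed

lemma eigenbasis_simple_zero_eigenvalue:
  fixes S :: "real^'n^'n" and p :: "'n \<Rightarrow> real^'n"
  assumes symm: "transpose S = S"
    and on: "\<And>k l. p k \<bullet> p l = (if k = l then 1 else 0)" and eig: "\<And>k. S *v p k = d k *\<^sub>R p k"
    and psd: "\<And>y. 0 \<le> y \<bullet> (S *v y)"
    and u: "u \<noteq> 0" "S *v u = 0" and kernel: "\<And>y. S *v y = 0 \<Longrightarrow> \<exists>c. y = c *\<^sub>R u"
  obtains k0 where "d k0 = 0" "\<And>k. k \<noteq> k0 \<Longrightarrow> d k > 0" "\<exists>c. p k0 = c *\<^sub>R u"
proof -
  have "\<exists>k. u \<bullet> p k \<noteq> 0"
  proof (rule ccontr)
    assume "\<nexists>k. u \<bullet> p k \<noteq> 0"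
    then have "u = 0"
      using orthonormal_family_expansion[OF on, of u] by simp
    with u(1) show False ..
  qed
  then obtain k0 where k0: "u \<bullet> p k0 \<noteq> 0" by blast
  have "d k0 * (u \<bullet> p k0) = 0"
    using symmetric_matrix_inner[OF symm, of u "p k0"] u(2) by (simp add: eig)
  with k0 have "d k0 = 0" by simp
  then obtain c0 where c0: "p k0 = c0 *\<^sub>R u"
    using kernel[of "p k0"] eig[of k0] by auto
  have "d k > 0" if "k \<noteq> k0" for k
  proof (rule ccontr)
    assume "\<not> d k > 0"
    moreover have "d k \<ge> 0"
      using psd[of "p k"] on[of k k] by (simp add: eig)
    ultimately obtain c where "p k = c *\<^sub>R u"
      using kernel[of "p k"] eig[of k] by force
    then have "p k = (c / c0) *\<^sub>R p k0"
      using c0 k0 by auto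
    then show False
      using on[of k k0] on[of k0 k0] on[of k k] \<open>k \<noteq> k0\<close> by auto
  qed
  with \<open>d k0 = 0\<close> c0 show thesis by (intro that) auto
qed

lemma eigenbasis_quadratic_form:
  fixes S :: "real^'n^'n" and p :: "'n \<Rightarrow> real^'n"
  assumes symm: "transpose S = S"
    and on: "\<And>k l. p k \<bullet> p l = (if k = l then 1 else 0)" and eig: "\<And>k. S *v p k = d k *\<^sub>R p k"
  shows "y \<bullet> (S *v y) = (\<Sum>k\<in>UNIV. d k * (y \<bullet> p k)\<^sup>2)"
proof -
  have "(S *v y) \<bullet> p k = d k * (y \<bullet> p k)" for k
    using symmetric_matrix_inner[OF symm, of y "p k"] by (simp add: eig)
  then show ?thesis
    unfolding orthonormal_family_parseval[OF on, of y "S *v y"] by (simp add: power2_eq_square mult_ac)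
qed

lemma kth_smallest_eigenvalue_1_eigenbasis:
  fixes S :: "real^'n^'n" and p :: "'n \<Rightarrow> real^'n"
  assumes on: "\<And>k l. p k \<bullet> p l = (if k = l then 1 else 0)" and eig: "\<And>k. S *v p k = d k *\<^sub>R p k"
    and card: "CARD('n) \<ge> 2" and k0: "d k0 = 0" "\<And>k. k \<noteq> k0 \<Longrightarrow> d k > 0"
  shows "kth_smallest_eigenvalue S 1 > 0"
    and "k \<noteq> k0 \<Longrightarrow> kth_smallest_eigenvalue S 1 \<le> d k"
proof -
  define R where "R = image_mset d (mset_set (UNIV - {k0}))"
  have "mset_set (UNIV::'n set) = add_mset k0 (mset_set (UNIV - {k0}))"
    by (metis finite insert_UNIV mset_set.insert_remove)
  then have eigenvalues: "eigenvalues_mset S = add_mset 0 R"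
    by (simp add: eigenvalues_mset_eigenbasis[OF on eig] R_def k0(1))
  have "UNIV - {k0} \<noteq> {}"
  proof
    assume "UNIV - {k0} = {}"
    then have "CARD('n) = card {k0}"
      by (metis Diff_eq_empty_iff subset_singletonD UNIV_not_empty)
    with card show False by simp
  qed
  then have "R \<noteq> {#}" by (simp add: R_def mset_set_empty_iff)
  have R_pos: "\<forall>l\<in>#R. 0 < l"
    using k0(2) by (auto simp: R_def)
  have lam2: "kth_smallest_eigenvalue S 1 = Min_mset R"
    unfolding kth_smallest_eigenvalue_def eigenvalues
    by (rule sorted_list_of_multiset_add_min_nth_1) (use \<open>R \<noteq> {#}\<close> R_pos in auto)
  with R_pos \<open>R \<noteq> {#}\<close> show "kth_smallest_eigenvalue S 1 > 0"
    by simp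
  assume "k \<noteq> k0"
  then have "d k \<in># R"
    by (simp add: R_def)
  then show "kth_smallest_eigenvalue S 1 \<le> d k"
    unfolding lam2 by (rule Min_le[rotated]) simp
qed

text \<open>Index \<open>0\<close> is taken by the simple eigenvalue \<open>0\<close>, so \<open>kth_smallest_eigenvalue S 1\<close>
  is the smallest eigenvalue on the orthogonal complement of the kernel.\<close>

lemma second_smallest_eigenvalue_rayleigh:
  fixes S :: "real^'n^'n"
  assumes symm: "transpose S = S" and card: "CARD('n) \<ge> 2"
    and psd: "\<And>y. 0 \<le> y \<bullet> (S *v y)"
    and u: "u \<noteq> 0" "S *v u = 0" and kernel: "\<And>y. S *v y = 0 \<Longrightarrow> \<exists>c. y = c *\<^sub>R u"
  shows "kth_smallest_eigenvalue S 1 > 0"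
    and "y \<bullet> u = 0 \<Longrightarrow> kth_smallest_eigenvalue S 1 * (y \<bullet> y) \<le> y \<bullet> (S *v y)"
proof -
  obtain p :: "'n \<Rightarrow> real^'n" and d
    where on: "\<And>k l. p k \<bullet> p l = (if k = l then 1 else 0)" and eig: "\<And>k. S *v p k = d k *\<^sub>R p k"
    using symmetric_matrix_orthonormal_eigenbasis[OF symm] by blast
  obtain k0 where k0: "d k0 = 0" "\<And>k. k \<noteq> k0 \<Longrightarrow> d k > 0" "\<exists>c. p k0 = c *\<^sub>R u"
    using eigenbasis_simple_zero_eigenvalue[OF symm on eig psd u kernel] by blast
  note lam2 = kth_smallest_eigenvalue_1_eigenbasis[OF on eig card k0(1,2)]
  show "kth_smallest_eigenvalue S 1 > 0"
    by (rule lam2(1))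
  assume "y \<bullet> u = 0"
  with k0(3) have "y \<bullet> p k0 = 0" by auto
  then have "kth_smallest_eigenvalue S 1 * (y \<bullet> p k)\<^sup>2 \<le> d k * (y \<bullet> p k)\<^sup>2" for k
    using lam2(2)[of k] by (cases "k = k0") (auto intro: mult_right_mono)
  then have "(\<Sum>k\<in>UNIV. kth_smallest_eigenvalue S 1 * (y \<bullet> p k)\<^sup>2) \<le> (\<Sum>k\<in>UNIV. d k * (y \<bullet> p k)\<^sup>2)"
    by (rule sum_mono)
  then show "kth_smallest_eigenvalue S 1 * (y \<bullet> y) \<le> y \<bullet> (S *v y)"
    unfolding eigenbasis_quadratic_form[OF symm on eig] orthonormal_family_parseval[OF on, of y y]
    by (simp add: power2_eq_square sum_distrib_left)
qed

section \<open>Weighted graph Laplacians\<close>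

locale connected_weighted_graph =
  fixes E :: "'n::finite \<Rightarrow> 'n \<Rightarrow> bool" and B :: "'n \<Rightarrow> 'n \<Rightarrow> real"
  assumes E_sym: "\<And>i j. E i j \<Longrightarrow> E j i"
    and E_irrefl: "\<And>i. \<not> E i i"
    and E_conn: "\<And>i j. E\<^sup>*\<^sup>* i j"
    and B_sym: "\<And>i j. B i j = B j i"
    and B_pos: "\<And>i j. E i j \<Longrightarrow> B i j > 0"
begin

definition lap :: "('n \<Rightarrow> real) \<Rightarrow> 'n \<Rightarrow> real" where
  "lap x i = (\<Sum>j\<in>{j. E i j}. B i j * (x i - x j))"

definition lap_form :: "('n \<Rightarrow> real) \<Rightarrow> ('n \<Rightarrow> real) \<Rightarrow> real" where
  "lap_form x y = (\<Sum>i\<in>UNIV. x i * lap y i)"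

lemma sum_edges_swap:
  "(\<Sum>i\<in>UNIV. \<Sum>j\<in>{j. E i j}. g i j) = (\<Sum>i\<in>UNIV. \<Sum>j\<in>{j. E i j}. g j i)"
proof -
  have "(\<Sum>i\<in>UNIV. \<Sum>j\<in>{j. E i j}. g i j) = (\<Sum>j\<in>UNIV. \<Sum>i\<in>{i. E i j}. g i j)"
    using sum.swap_restrict[of UNIV UNIV g "\<lambda>i j. E i j"] by simp
  also have "\<dots> = (\<Sum>j\<in>UNIV. \<Sum>i\<in>{i. E j i}. g i j)"
    by (intro sum.cong refl arg_cong[where f = "\<lambda>A. sum _ A"]) (auto intro: E_sym)
  finally show ?thesis .
qed

lemma lap_form_edge_sum:
  "lap_form x y = (\<Sum>i\<in>UNIV. \<Sum>j\<in>{j. E i j}. B i j * (x i - x j) * (y i - y j)) / 2"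
proof -
  have "lap_form x y = (\<Sum>i\<in>UNIV. \<Sum>j\<in>{j. E i j}. B i j * x i * (y i - y j))"
    by (simp add: lap_form_def lap_def sum_distrib_left mult_ac)
  moreover have "\<dots> = (\<Sum>i\<in>UNIV. \<Sum>j\<in>{j. E i j}. - (B i j * x j * (y i - y j)))"
    by (subst sum_edges_swap) (simp add: B_sym algebra_simps)
  ultimately have "2 * lap_form x y = (\<Sum>i\<in>UNIV. \<Sum>j\<in>{j. E i j}. B i j * x i * (y i - y j))
      + (\<Sum>i\<in>UNIV. \<Sum>j\<in>{j. E i j}. - (B i j * x j * (y i - y j)))"
    by simp
  also have "\<dots> = (\<Sum>i\<in>UNIV. \<Sum>j\<in>{j. E i j}. B i j * (x i - x j) * (y i - y j))"
    by (simp add: sum.distrib[symmetric] algebra_simps)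
  finally show ?thesis by simp
qed

lemma lap_form_commute: "lap_form x y = lap_form y x"
  by (simp add: lap_form_edge_sum mult_ac)

lemma edge_term_nonneg: "E i j \<Longrightarrow> 0 \<le> B i j * a * a"
  using B_pos[of i j] by (simp add: mult.assoc)

lemma lap_form_nonneg: "lap_form x x \<ge> 0"
  unfolding lap_form_edge_sum by (intro divide_nonneg_pos sum_nonneg) (auto intro!: edge_term_nonneg)

lemma sum_lap: "(\<Sum>i\<in>UNIV. lap x i) = 0"
  using lap_form_edge_sum[of "\<lambda>_. 1" x] by (simp add: lap_form_def)

lemma lap_diff_const: "lap (\<lambda>i. x i - c) = lap x"
  by (simp add: lap_def fun_eq_iff)

lemma lap_const: "lap (\<lambda>i. c) = (\<lambda>i. 0)"
  by (simp add: lap_def fun_eq_iff)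

lemma lap_form_add_left: "lap_form (\<lambda>i. x i + c * y i) w = lap_form x w + c * lap_form y w"
  by (simp add: lap_form_def sum.distrib sum_distrib_left algebra_simps)

lemma lap_form_diff_const_right: "lap_form x (\<lambda>i. y i - c) = lap_form x y"
  by (simp add: lap_form_def lap_diff_const)

lemma lap_form_eq_0_imp_const:
  assumes "lap_form x x = 0"
  shows "x i = x j"
proof -
  have nonneg: "\<forall>j\<in>{j. E i j}. 0 \<le> B i j * (x i - x j) * (x i - x j)" for i
    by (auto intro: edge_term_nonneg)
  have "(\<Sum>i\<in>UNIV. \<Sum>j\<in>{j. E i j}. B i j * (x i - x j) * (x i - x j)) = 0"
    using assms by (simp add: lap_form_edge_sum)
  then have "\<forall>i\<in>UNIV. (\<Sum>j\<in>{j. E i j}. B i j * (x i - x j) * (x i - x j)) = 0"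
    by (subst (asm) sum_nonneg_eq_0_iff) (auto intro!: sum_nonneg nonneg[rule_format])
  then have "\<forall>j\<in>{j. E i j}. B i j * (x i - x j) * (x i - x j) = 0" for i
    by (subst (asm) sum_nonneg_eq_0_iff) (use nonneg in auto)
  then have edge: "x i = x j" if "E i j" for i j
    using that B_pos[OF that] by (metis less_irrefl mem_Collect_eq mult_eq_0_iff right_minus_eq)
  from E_conn[of i j] show ?thesis
    by (induction rule: rtranclp_induct) (auto dest: edge)
qed

lemma lap_eq_laplacian_mult: "lap x i = (\<Sum>j\<in>UNIV. laplacian E B $ i $ j * x j)"
proof -
  have "laplacian E B $ i $ j * x j
      = (if i = j then (\<Sum>k\<in>{k. E i k}. B i k) * x j else 0) + (if E i j then - B i j * x j else 0)"
    for j
    using E_irrefl[of i] by (auto simp: laplacian_def)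
  then have "(\<Sum>j\<in>UNIV. laplacian E B $ i $ j * x j)
      = (\<Sum>k\<in>{k. E i k}. B i k) * x i - (\<Sum>j\<in>{j. E i j}. B i j * x j)"
    by (simp add: sum.distrib sum.inter_filter[symmetric] sum_negf)
  also have "\<dots> = lap x i"
    by (simp add: lap_def right_diff_distrib sum_subtractf sum_distrib_right)
  finally show ?thesis by simp
qed

lemma laplacian_symmetric: "laplacian E B $ i $ j = laplacian E B $ j $ i"
  by (auto simp: laplacian_def B_sym intro: E_sym)

lemma DERIV_lap:
  assumes "\<And>i. ((\<lambda>s. x s i) has_real_derivative x' i) (at t)"
  shows "((\<lambda>s. lap (x s) i) has_real_derivative lap x' i) (at t)"
  unfolding lap_def by (intro DERIV_sum DERIV_cmult DERIV_diff assms)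

lemma DERIV_lap_form:
  assumes "\<And>i. ((\<lambda>s. x s i) has_real_derivative x' i) (at t)"
  shows "((\<lambda>s. lap_form (x s) (x s)) has_real_derivative 2 * lap_form (x t) x') (at t)"
proof -
  note lap = DERIV_lap[OF assms]
  have "((\<lambda>s. lap_form (x s) (x s)) has_real_derivative
      (\<Sum>i\<in>UNIV. x' i * lap (x t) i + lap x' i * x t i)) (at t)"
    unfolding lap_form_def by (intro DERIV_sum DERIV_mult assms lap)
  moreover have "(\<Sum>i\<in>UNIV. x' i * lap (x t) i + lap x' i * x t i) = 2 * lap_form (x t) x'"
    using lap_form_commute[of x' "x t"] by (simp add: lap_form_def sum.distrib mult.commute)
  ultimately show ?thesis by simp
qed

end

locale inertia_weighted_graph = connected_weighted_graph E B
  for E :: "'n::finite \<Rightarrow> 'n \<Rightarrow> bool" and B +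
  fixes M :: "'n \<Rightarrow> real"
  assumes M_pos: "\<And>i. M i > 0"
begin

text \<open>The symmetric matrix \<open>M\<^sup>-\<^sup>1\<^sup>/\<^sup>2 L\<^sub>B M\<^sup>-\<^sup>1\<^sup>/\<^sup>2\<close>, similar to \<open>M\<^sup>-\<^sup>1 L\<^sub>B\<close>.\<close>

definition sym_lap :: "real^'n^'n" where
  "sym_lap = (\<chi> i j. laplacian E B $ i $ j / (sqrt (M i) * sqrt (M j)))"

definition sqrt_mass :: "real^'n" where
  "sqrt_mass = (\<chi> i. sqrt (M i))"

lemma M_nz: "M i \<noteq> 0"
  using M_pos[of i] by simp

lemma sqrt_M_pos: "sqrt (M i) > 0"
  using M_pos by simp

lemma sym_lap_symmetric: "transpose sym_lap = sym_lap"
  by (simp add: vec_eq_iff transpose_def sym_lap_def laplacian_symmetric mult.commute)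

lemma sym_lap_quadratic_form:
  "y \<bullet> (sym_lap *v y) = lap_form (\<lambda>i. y $ i / sqrt (M i)) (\<lambda>i. y $ i / sqrt (M i))"
  by (simp add: inner_vec_def matrix_vector_mult_def sym_lap_def lap_form_def
      lap_eq_laplacian_mult sum_distrib_left mult_ac)

lemma sym_lap_sqrt_mass: "sym_lap *v sqrt_mass = 0"
proof -
  have "(sym_lap *v sqrt_mass) $ i = lap (\<lambda>_. 1) i / sqrt (M i)" for i
    using sqrt_M_pos
    by (simp add: matrix_vector_mult_def sym_lap_def sqrt_mass_def lap_eq_laplacian_mult
        sum_divide_distrib M_nz)
  then show ?thesis
    by (simp add: vec_eq_iff lap_const)
qed

lemma sym_lap_kernel:
  assumes "sym_lap *v y = 0"
  shows "\<exists>c. y = c *\<^sub>R sqrt_mass"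
proof -
  obtain i0 :: 'n where True by simp
  define c where "c = y $ i0 / sqrt (M i0)"
  have "y $ i / sqrt (M i) = c" for i
    using assms sym_lap_quadratic_form[of y] unfolding c_def
    by (intro lap_form_eq_0_imp_const) simp
  then have "y $ i = c * sqrt (M i)" for i
    using sqrt_M_pos[of i] by (simp add: divide_eq_eq)
  then have "y = c *\<^sub>R sqrt_mass"
    by (simp add: vec_eq_iff sqrt_mass_def)
  then show ?thesis by blast
qed

lemma lambda2_eq: "lambda2 M E B = kth_smallest_eigenvalue sym_lap 1"
proof -
  define D :: "real^'n^'n" where "D = (\<chi> i j. if i = j then sqrt (M i) else 0)"
  have "det D \<noteq> 0"
    by (simp add: D_def det_diagonal M_nz)
  moreover have "D ** scaled_laplacian M E B = sym_lap ** D"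
  proof -
    have "(D ** scaled_laplacian M E B) $ i $ j = sqrt (M i) * (laplacian E B $ i $ j / M i)"
      and "(sym_lap ** D) $ i $ j = laplacian E B $ i $ j / (sqrt (M i) * sqrt (M j)) * sqrt (M j)"
      for i j
      by (simp_all add: D_def diagonal_matrix_mult scaled_laplacian_def sym_lap_def)
    moreover have "sqrt (M i) * (a / M i) = a / (sqrt (M i) * sqrt (M j)) * sqrt (M j)" for i j a
      using M_pos[of i] sqrt_M_pos[of j] by (simp add: field_simps)
    ultimately show ?thesis
      by (simp add: vec_eq_iff)
  qed
  ultimately show ?thesis
    unfolding lambda2_def kth_smallest_eigenvalue_def by (simp only: eigenvalues_mset_similar)
qed

lemma
  assumes "CARD('n) \<ge> 2"
  shows lambda2_pos: "lambda2 M E B > 0"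
    and lambda2_rayleigh:
      "(\<Sum>i\<in>UNIV. M i * x i) = 0 \<Longrightarrow> lambda2 M E B * (\<Sum>i\<in>UNIV. M i * (x i)\<^sup>2) \<le> lap_form x x"
proof -
  have psd: "0 \<le> y \<bullet> (sym_lap *v y)" for y
    by (simp add: sym_lap_quadratic_form lap_form_nonneg)
  have "sqrt_mass \<noteq> 0"
    by (simp add: vec_eq_iff sqrt_mass_def M_nz)
  note second = second_smallest_eigenvalue_rayleigh[OF sym_lap_symmetric assms psd this
      sym_lap_sqrt_mass sym_lap_kernel]
  show "lambda2 M E B > 0"
    using second(1) by (simp add: lambda2_eq)
  assume x: "(\<Sum>i\<in>UNIV. M i * x i) = 0"
  define y :: "real^'n" where "y = (\<chi> i. sqrt (M i) * x i)"
  have "y \<bullet> sqrt_mass = (\<Sum>i\<in>UNIV. M i * x i)"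
    by (simp add: y_def sqrt_mass_def inner_vec_def algebra_simps M_pos abs_of_pos)
  moreover have "y \<bullet> y = (\<Sum>i\<in>UNIV. M i * (x i)\<^sup>2)"
    by (simp add: y_def inner_vec_def power2_eq_square algebra_simps M_pos abs_of_pos)
  moreover have "(\<lambda>i. y $ i / sqrt (M i)) = x"
    by (simp add: y_def fun_eq_iff M_nz)
  ultimately show "lambda2 M E B * (\<Sum>i\<in>UNIV. M i * (x i)\<^sup>2) \<le> lap_form x x"
    using second(2)[of y] x by (simp add: lambda2_eq sym_lap_quadratic_form)
qed

end

lemma abs_mult_le_weighted_squares:
  fixes p q x y :: real
  assumes "p > 0"
  shows "q * \<bar>x\<bar> * \<bar>y\<bar> \<le> q\<^sup>2 / (2 * p) * x\<^sup>2 + p / 2 * y\<^sup>2"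
proof -
  have "0 \<le> (q * \<bar>x\<bar> - p * \<bar>y\<bar>)\<^sup>2" by simp
  then have "2 * p * (q * \<bar>x\<bar> * \<bar>y\<bar>) \<le> 2 * p * (q\<^sup>2 / (2 * p) * x\<^sup>2 + p / 2 * y\<^sup>2)"
    using assms by (simp add: power2_eq_square algebra_simps)
  with assms show ?thesis by simp
qed

lemma square_sum_le_weighted:
  fixes a b x y :: real
  assumes "a > 1" "(a - 1) * (b - 1) = 1"
  shows "(x + y)\<^sup>2 \<le> a * x\<^sup>2 + b * y\<^sup>2"
proof -
  have "0 \<le> (a - 1) * ((a - 1) * x\<^sup>2 + (b - 1) * y\<^sup>2 - 2 * x * y)"
  proof -
    have "(a - 1) * (b - 1) * y\<^sup>2 = y\<^sup>2"
      using assms(2) by simp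
    then have "(a - 1) * ((a - 1) * x\<^sup>2 + (b - 1) * y\<^sup>2 - 2 * x * y) = ((a - 1) * x - y)\<^sup>2"
      by (simp add: power2_eq_square algebra_simps)
    then show ?thesis by simp
  qed
  then have "0 \<le> (a - 1) * x\<^sup>2 + (b - 1) * y\<^sup>2 - 2 * x * y"
    using assms(1) by (simp add: zero_le_mult_iff)
  then show ?thesis
    by (simp add: power2_eq_square algebra_simps)
qed

lemma conjugate_weights:
  fixes q r :: real
  assumes rq: "0 < r" "r < 1" "q \<ge> 0"
  defines "a \<equiv> (1 + q * r) / (1 - r)" and "b \<equiv> (1 + q * r) / ((q + 1) * r)"
  shows "a > 1" and "(a - 1) * (b - 1) = 1"
proof -
  define P where "P = 1 + q * r"
  define X where "X = (q + 1) * r"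
  have "X > 0" and P_X: "P - (1 - r) = X" "P - X = 1 - r"
    using rq by (simp_all add: P_def X_def algebra_simps add_pos_nonneg)
  have "a = P / (1 - r)" "b = P / X"
    by (simp_all add: a_def b_def P_def X_def)
  then have "a - 1 = (P - (1 - r)) / (1 - r)" and "b - 1 = (P - X) / X"
    using rq \<open>X > 0\<close> by (simp_all add: diff_divide_distrib)
  then have a1: "a - 1 = X / (1 - r)" and b1: "b - 1 = (1 - r) / X"
    by (simp_all only: P_X)
  show "(a - 1) * (b - 1) = 1"
    using rq \<open>X > 0\<close> by (simp add: a1 b1)
  have "X / (1 - r) > 0"
    using rq \<open>X > 0\<close> by simp
  with a1 show "a > 1" by linarith
qed

lemma MVT_any_order:
  assumes "\<And>w. (f has_real_derivative f' w) (at w)"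
  obtains w where "f x - f y = (x - y) * f' w"
proof (cases x y rule: linorder_cases)
  case less
  with MVT2[OF less assms] show ?thesis
    by (metis minus_diff_eq mult_minus_left that)
next
  case equal
  then show ?thesis by (intro that) simp
next
  case greater
  with MVT2[OF greater assms] show ?thesis
    using that by blast
qed

lemma deriv_le_imp_one_sided_bound:
  assumes "\<And>w. (f has_real_derivative f' w) (at w)" "\<And>w. f' w \<le> - a"
  shows "(f x - f y) * (x - y) \<le> - a * (x - y)\<^sup>2"
proof -
  obtain w where "f x - f y = (x - y) * f' w"
    using MVT_any_order[OF assms(1)] .
  then have "(f x - f y) * (x - y) = f' w * (x - y)\<^sup>2"
    by (simp add: power2_eq_square)
  also have "\<dots> \<le> - a * (x - y)\<^sup>2"
    using assms(2)[of w] by (rule mult_right_mono) simp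
  finally show ?thesis .
qed

lemma deriv_bounded_imp_lipschitz:
  assumes "\<And>w. (f has_real_derivative f' w) (at w)" "\<And>w. \<bar>f' w\<bar> \<le> b"
  shows "\<bar>f x - f y\<bar> \<le> b * \<bar>x - y\<bar>"
proof -
  obtain w where "f x - f y = (x - y) * f' w"
    using MVT_any_order[OF assms(1)] .
  then show ?thesis
    using assms(2)[of w] by (simp add: abs_mult mult_right_mono mult.commute)
qed

lemma zero_weighted_sum_component_bound:
  fixes M e :: "'n::finite \<Rightarrow> real"
  assumes M: "\<And>j. M j > 0" and e: "(\<Sum>j\<in>UNIV. M j * e j) = 0"
  shows "(e i)\<^sup>2 \<le> (1 / M i - 1 / (\<Sum>j\<in>UNIV. M j)) * (\<Sum>j\<in>UNIV. M j * (e j)\<^sup>2)"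
proof -
  define m where "m = (\<Sum>j\<in>UNIV. M j)"
  define E2 where "E2 = (\<Sum>j\<in>UNIV. M j * (e j)\<^sup>2)"
  let ?R = "UNIV - {i}"
  have m: "m = M i + (\<Sum>j\<in>?R. M j)" and E2: "E2 = M i * (e i)\<^sup>2 + (\<Sum>j\<in>?R. M j * (e j)\<^sup>2)"
    by (simp_all add: m_def E2_def sum.remove[of UNIV i])
  have "M i * e i = - (\<Sum>j\<in>?R. M j * e j)"
    using e by (simp add: sum.remove[of UNIV i] eq_neg_iff_add_eq_0)
  also have "\<dots>\<^sup>2 \<le> (\<Sum>j\<in>?R. M j) * (\<Sum>j\<in>?R. M j * (e j)\<^sup>2)"
    using Cauchy_Schwarz_ineq_sum[of "\<lambda>j. sqrt (M j)" "\<lambda>j. sqrt (M j) * e j" ?R] M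
    by (simp add: power_mult_distrib less_imp_le mult.assoc[symmetric] abs_of_pos)
  finally have "(M i * e i)\<^sup>2 \<le> (m - M i) * (E2 - M i * (e i)\<^sup>2)"
    by (simp add: m E2)
  then have "M i * m * (e i)\<^sup>2 \<le> (m - M i) * E2"
    by (simp add: power2_eq_square algebra_simps)
  moreover have "m > 0"
    using sum_pos[of UNIV M] M by (simp add: m_def)
  ultimately have "(e i)\<^sup>2 \<le> (m - M i) * E2 / (M i * m)"
    using M[of i] by (simp add: le_divide_eq mult.commute)
  also have "\<dots> = (1 / M i - 1 / m) * E2"
    using M[of i] \<open>m > 0\<close> by (simp add: field_simps)
  finally show ?thesis by (simp add: m_def E2_def)
qed

lemma lyapunov_node_estimate:
  fixes D eps lam L mu c z e g C :: real
  assumes D: "mu \<le> D" "D \<le> L" and eps: "0 < eps" "eps \<le> mu" and "lam > 0" "mu > 0"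
    and g: "\<bar>g\<bar> \<le> C"
    and const: "eps + eps * L\<^sup>2 / (2 * lam) + c / 2 \<le> 5 * mu / 8"
  shows "- (D - eps) * z\<^sup>2 + eps * (D - eps) * z * e + z * g
         \<le> - (c / 2) * z\<^sup>2 + eps * lam / 2 * e\<^sup>2 + 2 / (3 * mu) * C\<^sup>2"
proof -
  define P where "P = L\<^sup>2 / (2 * lam)"
  have "(D - eps) * z * e \<le> \<bar>(D - eps) * z * e\<bar>"
    by simp
  also have "\<dots> = (D - eps) * \<bar>z\<bar> * \<bar>e\<bar>"
    using D eps by (simp add: abs_mult)
  also have "\<dots> \<le> L * \<bar>z\<bar> * \<bar>e\<bar>"
    using D eps by (intro mult_right_mono) auto
  also have "\<dots> \<le> P * z\<^sup>2 + lam / 2 * e\<^sup>2"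
    using abs_mult_le_weighted_squares[OF \<open>lam > 0\<close>] by (simp add: P_def)
  finally have "eps * ((D - eps) * z * e) \<le> eps * (P * z\<^sup>2 + lam / 2 * e\<^sup>2)"
    using eps by (intro mult_left_mono) auto
  then have cross: "eps * (D - eps) * z * e \<le> eps * P * z\<^sup>2 + eps * lam / 2 * e\<^sup>2"
    by (simp add: algebra_simps)
  have "z * g \<le> \<bar>z\<bar> * \<bar>g\<bar>"
    using abs_ge_self[of "z * g"] by (simp add: abs_mult)
  also have "\<dots> \<le> \<bar>z\<bar> * C"
    using g by (simp add: mult_left_mono)
  also have "\<dots> \<le> 1 * \<bar>C\<bar> * \<bar>z\<bar>"
    by (simp add: mult.commute mult_right_mono)
  also have "\<dots> \<le> 3 * mu / 8 * z\<^sup>2 + 2 / (3 * mu) * C\<^sup>2"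
    using abs_mult_le_weighted_squares[of "3 * mu / 4" 1 C z] \<open>mu > 0\<close> by simp
  finally have forcing: "z * g \<le> 3 * mu / 8 * z\<^sup>2 + 2 / (3 * mu) * C\<^sup>2" .
  have damping: "- (D - eps) * z\<^sup>2 \<le> - (mu - eps) * z\<^sup>2"
    using D by (intro mult_right_mono) auto
  have "eps * P = eps * L\<^sup>2 / (2 * lam)"
    by (simp add: P_def)
  with const have "- (mu - eps) + eps * P + 3 * mu / 8 \<le> - (c / 2)"
    by linarith
  then have "(- (mu - eps) + eps * P + 3 * mu / 8) * z\<^sup>2 \<le> - (c / 2) * z\<^sup>2"
    by (rule mult_right_mono) simp
  then have "- (mu - eps) * z\<^sup>2 + eps * P * z\<^sup>2 + 3 * mu / 8 * z\<^sup>2 \<le> - (c / 2) * z\<^sup>2"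
    by (simp add: algebra_simps)
  with cross forcing damping show ?thesis
    by linarith
qed

lemma tendsto_at_right_of_continuous_on:
  fixes g :: "real \<Rightarrow> 'a::topological_space"
  assumes "continuous_on {a..} g"
  shows "(g \<longlongrightarrow> g a) (at_right a)"
proof -
  have "(g \<longlongrightarrow> g a) (at a within {a..})"
    using assms by (simp add: continuous_on_def)
  then show ?thesis
    by (rule tendsto_within_subset) auto
qed

text \<open>Gronwall's inequality: \<open>e\<^sup>c\<^sup>t (W t - F / c)\<close> is nonincreasing.\<close>

lemma differential_inequality_exp_bound:
  fixes W W' :: "real \<Rightarrow> real"
  assumes c: "c > 0" and F: "F \<ge> 0"
    and deriv: "\<And>t. t > 0 \<Longrightarrow> (W has_real_derivative W' t) (at t)"
    and bound: "\<And>t. t > 0 \<Longrightarrow> W' t \<le> - c * W t + F"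
    and init: "(W \<longlongrightarrow> W0) (at_right 0)"
    and t: "t > 0"
  shows "W t \<le> W0 * exp (- c * t) + F / c"
proof -
  define h where "h x = exp (c * x) * (W x - F / c)" for x
  have h_deriv: "(h has_real_derivative exp (c * x) * (W' x + c * W x - F)) (at x)" if "x > 0" for x
  proof -
    have "((\<lambda>x. exp (c * x)) has_real_derivative exp (c * x) * c) (at x)"
      by (auto intro!: derivative_eq_intros)
    from DERIV_mult[OF this DERIV_diff[OF deriv[OF that] DERIV_const]]
    have "(h has_real_derivative exp (c * x) * c * (W x - F / c) + W' x * exp (c * x)) (at x)"
      by (simp add: h_def[abs_def])
    moreover have "exp (c * x) * c * (W x - F / c) + W' x * exp (c * x)
        = exp (c * x) * (W' x + c * W x - F)"
      using c by (simp add: field_simps)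
    ultimately show ?thesis by simp
  qed
  have "h t \<le> h x" if "0 < x" "x \<le> t" for x
  proof (rule DERIV_nonpos_imp_nonincreasing[OF that(2)])
    fix y assume "x \<le> y" "y \<le> t"
    with that have "y > 0" by simp
    with h_deriv bound[of y] show "\<exists>D. (h has_real_derivative D) (at y) \<and> D \<le> 0"
      by (intro exI conjI) (auto intro!: mult_nonneg_nonpos)
  qed
  then have "eventually (\<lambda>x. h t \<le> h x) (at_right 0)"
    unfolding eventually_at_right_field using t by (intro exI[of _ t]) auto
  moreover have "(h \<longlongrightarrow> exp (c * 0) * (W0 - F / c)) (at_right 0)"
    unfolding h_def[abs_def] by (intro tendsto_intros init)
  ultimately have "h t \<le> W0 - F / c"
    using tendsto_le[OF trivial_limit_at_right_real _ tendsto_const] by fastforce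
  then have "W t - F / c \<le> (W0 - F / c) * exp (- c * t)"
    unfolding h_def by (simp add: exp_minus field_simps)
  also have "\<dots> \<le> W0 * exp (- c * t)"
    using c F by (simp add: algebra_simps)
  finally show ?thesis by simp
qed

section \<open>A Lyapunov function for the network\<close>

locale power_network = inertia_weighted_graph E B M
  for E :: "'n::finite \<Rightarrow> 'n \<Rightarrow> bool" and B M +
  fixes f f' :: "'n \<Rightarrow> real \<Rightarrow> real"
    and \<xi> \<xi>' :: "real \<Rightarrow> 'n \<Rightarrow> real"
    and \<xi>0m \<xi>0p :: "'n \<Rightarrow> real"
    and \<theta> \<omega> :: "real \<Rightarrow> 'n \<Rightarrow> real"
    and \<omega>b :: "real \<Rightarrow> real"
    and \<mu> L :: real
  assumes N2: "CARD('n) \<ge> 2"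
    and f_deriv: "\<And>i w. (f i has_real_derivative f' i w) (at w)"
    and mu_pos: "\<mu> > 0" and L_pos: "L > 0"
    and f'_bounds: "\<And>i w. - L \<le> f' i w / M i \<and> f' i w / M i \<le> - \<mu>"
    and \<xi>_deriv: "\<And>i t. t > 0 \<Longrightarrow> ((\<lambda>s. \<xi> s i) has_real_derivative \<xi>' t i) (at t)"
    and \<xi>0p_lim: "\<And>i. ((\<lambda>t. \<xi> t i) \<longlongrightarrow> \<xi>0p i) (at_right 0)"
    and \<theta>_cont: "\<And>i. continuous_on {0..} (\<lambda>t. \<theta> t i)"
    and \<omega>_cont: "\<And>i. continuous_on {0..} (\<lambda>t. \<omega> t i)"
    and \<theta>_ode: "\<And>i t. t > 0 \<Longrightarrow> ((\<lambda>s. \<theta> s i) has_real_derivative \<omega> t i) (at t)"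
    and \<omega>_ode: "\<And>i t. t > 0 \<Longrightarrow> ((\<lambda>s. \<omega> s i) has_real_derivative
        (f i (\<omega> t i) + \<xi> t i - (\<Sum>j\<in>{j. E i j}. B i j * (\<theta> t i - \<theta> t j))) / M i) (at t)"
    and \<omega>b_cont: "continuous_on {0..} \<omega>b"
    and \<omega>b_ode: "\<And>t. t > 0 \<Longrightarrow> (\<omega>b has_real_derivative
        ((\<Sum>i\<in>UNIV. f i (\<omega>b t)) / real CARD('n) + (\<Sum>i\<in>UNIV. \<xi> t i) / real CARD('n))
          / ((\<Sum>i\<in>UNIV. M i) / real CARD('n))) (at t)"
    and \<omega>b_init: "\<omega>b 0 = (\<Sum>i\<in>UNIV. M i * \<omega> 0 i) / (\<Sum>i\<in>UNIV. M i)"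
    and steady1: "\<And>i. 0 = f i (\<omega> 0 i) + \<xi>0m i - (\<Sum>j\<in>{j. E i j}. B i j * (\<theta> 0 i - \<theta> 0 j))"
    and steady2: "\<And>i j. E i j \<Longrightarrow> 0 = \<omega> 0 i - \<omega> 0 j"
    and C_finite: "\<And>i. bdd_above ((\<lambda>t. \<bar>\<xi>' t i\<bar> / M i) ` {0<..})"
begin

definition Mtot :: real where
  "Mtot = (\<Sum>i\<in>UNIV. M i)"

definition lam :: real where
  "lam = lambda2 M E B"

definition c :: real where
  "c = \<mu> * lam / (4 * (lam + 4 * L\<^sup>2))"

definition eps :: real where
  "eps = 2 * c"

definition Q :: real where
  "Q = 16 * real CARD('n) * L\<^sup>2 / (3 * \<mu>\<^sup>2) * (1 + 4 * L\<^sup>2 / lam)"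

definition kappa :: real where
  "kappa = Mtot * lam / (2 * (Q + 1))"

definition Cmax :: real where
  "Cmax = Max (range (\<lambda>i. Sup ((\<lambda>s. \<bar>\<xi>' s i\<bar> / M i) ` {0<..})))"

definition F :: real where
  "F = 2 * Mtot * Cmax\<^sup>2 / (3 * \<mu>)"

definition omega_avg :: "real \<Rightarrow> real" where
  "omega_avg t = (\<Sum>i\<in>UNIV. M i * \<omega> t i) / Mtot"

definition dev :: "real \<Rightarrow> 'n \<Rightarrow> real" where
  "dev t i = \<omega> t i - omega_avg t"

definition gap :: "real \<Rightarrow> real" where
  "gap t = omega_avg t - \<omega>b t"

definition accel :: "real \<Rightarrow> 'n \<Rightarrow> real" where
  "accel t i = (f i (\<omega> t i) + \<xi> t i - lap (\<theta> t) i) / M i"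

definition accel' :: "real \<Rightarrow> 'n \<Rightarrow> real" where
  "accel' t i = (f' i (\<omega> t i) * accel t i + \<xi>' t i - lap (\<omega> t) i) / M i"

definition omega_avg' :: "real \<Rightarrow> real" where
  "omega_avg' t = (\<Sum>i\<in>UNIV. M i * accel t i) / Mtot"

definition omega_b' :: "real \<Rightarrow> real" where
  "omega_b' t = ((\<Sum>i\<in>UNIV. f i (\<omega>b t)) + (\<Sum>i\<in>UNIV. \<xi> t i)) / Mtot"

definition z :: "real \<Rightarrow> 'n \<Rightarrow> real" where
  "z t i = accel t i + eps * dev t i"

definition V :: "real \<Rightarrow> real" where
  "V t = lap_form (dev t) (dev t) / 2 + (\<Sum>i\<in>UNIV. M i * (z t i)\<^sup>2) / 2"

definition W :: "real \<Rightarrow> real" where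
  "W t = V t + kappa * (gap t)\<^sup>2"

definition V' :: "real \<Rightarrow> real" where
  "V' t = lap_form (dev t) (\<lambda>i. accel t i - omega_avg' t)
    + (\<Sum>i\<in>UNIV. M i * z t i * (accel' t i + eps * (accel t i - omega_avg' t)))"

definition W' :: "real \<Rightarrow> real" where
  "W' t = V' t + kappa * (2 * gap t * (omega_avg' t - omega_b' t))"

lemma Mtot_pos: "Mtot > 0"
  unfolding Mtot_def using M_pos by (simp add: sum_pos)

lemma lam_pos: "lam > 0"
  using lambda2_pos[OF N2] by (simp add: lam_def)

lemma lam_rayleigh: "(\<Sum>i\<in>UNIV. M i * x i) = 0 \<Longrightarrow> lam * (\<Sum>i\<in>UNIV. M i * (x i)\<^sup>2) \<le> lap_form x x"
  using lambda2_rayleigh[OF N2] by (simp add: lam_def)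

lemma c_pos: "c > 0" and eps_pos: "eps > 0"
  using mu_pos lam_pos by (simp_all add: c_def eps_def add_pos_nonneg)

lemma c_le: "c \<le> \<mu> / 4"
  using mu_pos lam_pos by (simp add: c_def field_simps add_pos_nonneg)

lemma Q_nonneg: "Q \<ge> 0"
  using lam_pos by (simp add: Q_def)

lemma kappa_pos: "kappa > 0"
  using Mtot_pos lam_pos Q_nonneg by (simp add: kappa_def)

lemma F_nonneg: "F \<ge> 0"
  using Mtot_pos mu_pos by (simp add: F_def)

lemma forcing_bound: "t > 0 \<Longrightarrow> \<bar>\<xi>' t i / M i\<bar> \<le> Cmax"
proof -
  assume "t > 0"
  then have "\<bar>\<xi>' t i\<bar> / M i \<le> Sup ((\<lambda>s. \<bar>\<xi>' s i\<bar> / M i) ` {0<..})"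
    using C_finite by (intro cSup_upper) auto
  also have "\<dots> \<le> Cmax"
    unfolding Cmax_def by (rule Max_ge) auto
  finally show ?thesis
    using M_pos[of i] by (simp add: abs_divide)
qed

lemma f'_bounds_scaled: "- L * M i \<le> f' i w" "f' i w \<le> - \<mu> * M i"
  using f'_bounds[of i w] M_pos[of i] by (simp_all add: le_divide_eq divide_le_eq)

lemma f_one_sided_bound: "(f i x - f i y) * (x - y) \<le> - (\<mu> * M i) * (x - y)\<^sup>2"
  using f'_bounds_scaled(2) by (intro deriv_le_imp_one_sided_bound[OF f_deriv]) simp

lemma f_lipschitz: "\<bar>f i x - f i y\<bar> \<le> L * M i * \<bar>x - y\<bar>"
proof (rule deriv_bounded_imp_lipschitz[OF f_deriv])
  fix w
  have "\<mu> * M i > 0"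
    using mu_pos M_pos[of i] by simp
  then show "\<bar>f' i w\<bar> \<le> L * M i"
    using f'_bounds_scaled[of i w] by (simp add: abs_if)
qed

lemma sum_dev: "(\<Sum>i\<in>UNIV. M i * dev t i) = 0"
proof -
  have "(\<Sum>i\<in>UNIV. M i * dev t i) = (\<Sum>i\<in>UNIV. M i * \<omega> t i) - Mtot * omega_avg t"
    by (simp add: dev_def right_diff_distrib sum_subtractf Mtot_def sum_distrib_right)
  then show ?thesis
    using Mtot_pos by (simp add: omega_avg_def)
qed

lemma omega_avg'_eq: "omega_avg' t = ((\<Sum>i\<in>UNIV. f i (\<omega> t i)) + (\<Sum>i\<in>UNIV. \<xi> t i)) / Mtot"
proof -
  have "(\<Sum>i\<in>UNIV. M i * accel t i) = (\<Sum>i\<in>UNIV. f i (\<omega> t i) + \<xi> t i - lap (\<theta> t) i)"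
    by (simp add: accel_def M_nz)
  then show ?thesis
    by (simp add: omega_avg'_def sum.distrib sum_subtractf sum_lap)
qed

lemma DERIV_omega: "t > 0 \<Longrightarrow> ((\<lambda>s. \<omega> s i) has_real_derivative accel t i) (at t)"
  using \<omega>_ode[of t i] by (simp add: accel_def lap_def)

lemma DERIV_accel:
  assumes "t > 0"
  shows "((\<lambda>s. accel s i) has_real_derivative accel' t i) (at t)"
proof -
  have "((\<lambda>s. f i (\<omega> s i)) has_real_derivative f' i (\<omega> t i) * accel t i) (at t)"
    by (rule DERIV_chain2[OF f_deriv DERIV_omega[OF assms]])
  moreover have "((\<lambda>s. lap (\<theta> s) i) has_real_derivative lap (\<omega> t) i) (at t)"
    by (rule DERIV_lap) (rule \<theta>_ode[OF assms])
  ultimately have "((\<lambda>s. (f i (\<omega> s i) + \<xi> s i - lap (\<theta> s) i) / M i) has_real_derivative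
      (f' i (\<omega> t i) * accel t i + \<xi>' t i - lap (\<omega> t) i) / M i) (at t)"
    by (intro DERIV_cdivide DERIV_diff DERIV_add \<xi>_deriv[OF assms])
  then show ?thesis
    by (simp add: accel_def[abs_def] accel'_def)
qed

lemma DERIV_omega_avg:
  assumes "t > 0"
  shows "(omega_avg has_real_derivative omega_avg' t) (at t)"
  unfolding omega_avg_def[abs_def] omega_avg'_def
  by (intro DERIV_cdivide DERIV_sum DERIV_cmult DERIV_omega[OF assms])

lemma DERIV_dev:
  assumes "t > 0"
  shows "((\<lambda>s. dev s i) has_real_derivative accel t i - omega_avg' t) (at t)"
  unfolding dev_def by (intro DERIV_diff DERIV_omega[OF assms] DERIV_omega_avg[OF assms])

lemma DERIV_z:
  assumes "t > 0"
  shows "((\<lambda>s. z s i) has_real_derivative accel' t i + eps * (accel t i - omega_avg' t)) (at t)"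
  unfolding z_def by (intro DERIV_add DERIV_cmult DERIV_accel[OF assms] DERIV_dev[OF assms])

lemma DERIV_V:
  assumes "t > 0"
  shows "(V has_real_derivative V' t) (at t)"
proof -
  have "((\<lambda>s. (z s i)\<^sup>2) has_real_derivative 2 * z t i * (accel' t i + eps * (accel t i - omega_avg' t))) (at t)"
    for i
    using DERIV_power[OF DERIV_z[OF assms, of i], where n = 2] by (simp add: mult_ac)
  then have "(V has_real_derivative 2 * lap_form (dev t) (\<lambda>i. accel t i - omega_avg' t) / 2
      + (\<Sum>i\<in>UNIV. M i * (2 * z t i * (accel' t i + eps * (accel t i - omega_avg' t)))) / 2) (at t)"
    unfolding V_def[abs_def]
    by (intro DERIV_add DERIV_cdivide DERIV_sum DERIV_cmult DERIV_lap_form DERIV_dev[OF assms])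
  then show ?thesis
    by (simp add: V'_def sum_divide_distrib mult_ac)
qed

lemma DERIV_W:
  assumes "t > 0"
  shows "(W has_real_derivative W' t) (at t)"
proof -
  have "((\<Sum>i\<in>UNIV. f i (\<omega>b t)) / real CARD('n) + (\<Sum>i\<in>UNIV. \<xi> t i) / real CARD('n))
      / ((\<Sum>i\<in>UNIV. M i) / real CARD('n)) = omega_b' t"
    using Mtot_pos by (simp add: omega_b'_def Mtot_def field_simps less_imp_neq[symmetric])
  with \<omega>b_ode[OF assms] have "(\<omega>b has_real_derivative omega_b' t) (at t)"
    by simp
  then have "(gap has_real_derivative omega_avg' t - omega_b' t) (at t)"
    unfolding gap_def[abs_def] by (intro DERIV_diff DERIV_omega_avg[OF assms])
  from DERIV_power[OF this, where n = 2]
  have "(W has_real_derivative V' t + kappa * (2 * gap t * (omega_avg' t - omega_b' t))) (at t)"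
    unfolding W_def[abs_def] by (intro DERIV_add DERIV_cmult DERIV_V[OF assms]) (simp add: mult_ac)
  then show ?thesis
    by (simp add: W'_def)
qed

lemma node_constant: "eps + eps * L\<^sup>2 / (2 * lam) + c / 2 \<le> 5 * \<mu> / 8"
proof -
  define D where "D = lam + 4 * L\<^sup>2"
  have D: "D > 0" "c = \<mu> * lam / (4 * D)"
    using lam_pos by (simp_all add: D_def c_def add_pos_nonneg)
  have "eps + eps * L\<^sup>2 / (2 * lam) + c / 2 = c * (5 * lam + 2 * L\<^sup>2) / (2 * lam)"
    using lam_pos by (simp add: eps_def field_simps)
  also have "\<dots> = \<mu> * (5 * lam + 2 * L\<^sup>2) / (8 * D)"
    unfolding D(2) using lam_pos D(1) by (simp add: field_simps)
  also have "\<dots> \<le> \<mu> * (5 * D) / (8 * D)"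
    using mu_pos D by (intro divide_right_mono mult_left_mono) (simp_all add: D_def)
  also have "\<dots> = 5 * \<mu> / 8"
    using D by simp
  finally show ?thesis .
qed

lemma gap_constant: "kappa * L\<^sup>2 / (\<mu> * Mtot * lam) \<le> c / 2"
proof -
  define D where "D = lam + 4 * L\<^sup>2"
  have D: "D > 0" "c = \<mu> * lam / (4 * D)" "1 + 4 * L\<^sup>2 / lam = D / lam"
    using lam_pos by (simp_all add: D_def c_def add_pos_nonneg field_simps)
  have "L\<^sup>2 * 1 \<le> L\<^sup>2 * real CARD('n)"
    by (intro mult_left_mono) simp_all
  also have "\<dots> \<le> 4 * real CARD('n) * L\<^sup>2 / 3"
    by simp
  also have "\<dots> = \<mu> * c * Q"
    unfolding Q_def D(2,3) using mu_pos lam_pos D(1) by (simp add: field_simps power2_eq_square)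
  also have "\<dots> \<le> \<mu> * c * (Q + 1)"
    using mu_pos c_pos by simp
  also have "\<dots> = c / 2 * (2 * \<mu> * (Q + 1))"
    by simp
  finally have "L\<^sup>2 \<le> c / 2 * (2 * \<mu> * (Q + 1))"
    by simp
  moreover have "kappa * L\<^sup>2 / (\<mu> * Mtot * lam) = L\<^sup>2 / (2 * \<mu> * (Q + 1))"
    using Mtot_pos lam_pos by (simp add: kappa_def)
  ultimately show ?thesis
    using mu_pos Q_nonneg by (simp add: pos_divide_le_eq add_nonneg_pos)
qed

definition damping :: "real \<Rightarrow> 'n \<Rightarrow> real" where
  "damping t i = - f' i (\<omega> t i) / M i"

definition node_term :: "real \<Rightarrow> 'n \<Rightarrow> real" where
  "node_term t i = - (damping t i - eps) * (z t i)\<^sup>2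
    + eps * (damping t i - eps) * z t i * dev t i + z t i * (\<xi>' t i / M i)"

lemma V'_eq:
  "V' t = (\<Sum>i\<in>UNIV. M i * node_term t i) - eps * lap_form (dev t) (dev t) - eps * Mtot * (omega_avg' t)\<^sup>2"
proof -
  have lap_dev: "lap (dev t) = lap (\<omega> t)"
    using lap_diff_const[of "\<omega> t" "omega_avg t"] by (simp add: dev_def[abs_def])
  have first: "lap_form (dev t) (\<lambda>i. accel t i - omega_avg' t) = lap_form (accel t) (dev t)"
    by (simp add: lap_form_diff_const_right lap_form_commute)
  have coupling: "(\<Sum>i\<in>UNIV. z t i * lap (dev t) i) = lap_form (accel t) (dev t) + eps * lap_form (dev t) (dev t)"
    using lap_form_add_left[of "accel t" eps "dev t" "dev t"] by (simp add: lap_form_def z_def)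
  have mean_z: "(\<Sum>i\<in>UNIV. M i * z t i) = Mtot * omega_avg' t"
  proof -
    have "(\<Sum>i\<in>UNIV. M i * z t i) = (\<Sum>i\<in>UNIV. M i * accel t i) + eps * (\<Sum>i\<in>UNIV. M i * dev t i)"
      by (simp add: z_def algebra_simps sum.distrib sum_distrib_left)
    then show ?thesis
      using sum_dev[of t] Mtot_pos by (simp add: omega_avg'_def)
  qed
  have node: "M i * z t i * (accel' t i + eps * (accel t i - omega_avg' t))
      = M i * node_term t i - z t i * lap (dev t) i - eps * omega_avg' t * (M i * z t i)" for i
  proof -
    have accel_eq: "accel t i = z t i - eps * dev t i"
      by (simp add: z_def)
    show ?thesis
      unfolding node_term_def damping_def accel'_def lap_dev accel_eq using M_nz[of i]
      by (simp add: field_simps power2_eq_square)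
  qed
  have "V' t = lap_form (accel t) (dev t) + ((\<Sum>i\<in>UNIV. M i * node_term t i)
      - (\<Sum>i\<in>UNIV. z t i * lap (dev t) i) - eps * omega_avg' t * (\<Sum>i\<in>UNIV. M i * z t i))"
    unfolding V'_def first node by (simp add: sum_subtractf sum_distrib_left)
  then show ?thesis
    unfolding coupling mean_z by (simp add: power2_eq_square algebra_simps)
qed

lemma node_term_bound:
  assumes "t > 0"
  shows "node_term t i \<le> - (c / 2) * (z t i)\<^sup>2 + eps * lam / 2 * (dev t i)\<^sup>2 + 2 / (3 * \<mu>) * Cmax\<^sup>2"
  unfolding node_term_def
proof (rule lyapunov_node_estimate)
  show "\<mu> \<le> damping t i" "damping t i \<le> L"
    using f'_bounds[of i "\<omega> t i"] by (auto simp: damping_def)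
  show "0 < eps" "eps \<le> \<mu>"
    using eps_pos c_le mu_pos by (auto simp: eps_def)
  show "\<bar>\<xi>' t i / M i\<bar> \<le> Cmax"
    by (rule forcing_bound[OF assms])
qed (use lam_pos mu_pos node_constant in auto)

lemma V'_bound:
  assumes "t > 0"
  shows "V' t \<le> F - eps / 2 * lap_form (dev t) (dev t) - c / 2 * (\<Sum>i\<in>UNIV. M i * (z t i)\<^sup>2)"
proof -
  have "(\<Sum>i\<in>UNIV. M i * node_term t i)
      \<le> (\<Sum>i\<in>UNIV. M i * (- (c / 2) * (z t i)\<^sup>2 + eps * lam / 2 * (dev t i)\<^sup>2 + 2 / (3 * \<mu>) * Cmax\<^sup>2))"
    by (intro sum_mono mult_left_mono node_term_bound[OF assms]) (use M_pos in \<open>simp add: less_imp_le\<close>)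
  also have "\<dots> = (\<Sum>i\<in>UNIV. - (c / 2) * (M i * (z t i)\<^sup>2) + eps / 2 * lam * (M i * (dev t i)\<^sup>2)
      + 2 / (3 * \<mu>) * Cmax\<^sup>2 * M i)"
    by (rule sum.cong) (simp_all add: algebra_simps)
  also have "\<dots> = - (c / 2) * (\<Sum>i\<in>UNIV. M i * (z t i)\<^sup>2)
      + eps / 2 * (lam * (\<Sum>i\<in>UNIV. M i * (dev t i)\<^sup>2)) + F"
    by (simp only: sum.distrib flip: sum_distrib_left Mtot_def) (simp add: F_def mult_ac)
  also have "\<dots> \<le> - (c / 2) * (\<Sum>i\<in>UNIV. M i * (z t i)\<^sup>2) + eps / 2 * lap_form (dev t) (dev t) + F"
    using lam_rayleigh[OF sum_dev[of t]] eps_pos by simp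
  moreover have "eps * Mtot * (omega_avg' t)\<^sup>2 \<ge> 0"
    using eps_pos Mtot_pos by simp
  ultimately show ?thesis
    using V'_eq[of t] by linarith
qed

lemma gap_node_bound:
  "gap t * (f i (\<omega> t i) - f i (\<omega>b t)) \<le> M i * (L\<^sup>2 / (2 * \<mu>) * (dev t i)\<^sup>2 - \<mu> / 2 * (gap t)\<^sup>2)"
proof -
  have "gap t * (f i (\<omega> t i) - f i (omega_avg t)) \<le> \<bar>gap t\<bar> * \<bar>f i (\<omega> t i) - f i (omega_avg t)\<bar>"
    by (metis abs_ge_self abs_mult)
  also have "\<dots> \<le> \<bar>gap t\<bar> * (L * M i * \<bar>dev t i\<bar>)"
    using f_lipschitz by (intro mult_left_mono) (auto simp: dev_def)
  also have "\<dots> = M i * (L * \<bar>dev t i\<bar> * \<bar>gap t\<bar>)"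
    by (simp add: mult_ac)
  also have "\<dots> \<le> M i * (L\<^sup>2 / (2 * \<mu>) * (dev t i)\<^sup>2 + \<mu> / 2 * (gap t)\<^sup>2)"
    using abs_mult_le_weighted_squares[OF mu_pos, of L "dev t i" "gap t"] M_pos[of i]
    by (intro mult_left_mono) auto
  finally have "gap t * (f i (\<omega> t i) - f i (omega_avg t))
      \<le> M i * (L\<^sup>2 / (2 * \<mu>) * (dev t i)\<^sup>2 + \<mu> / 2 * (gap t)\<^sup>2)" .
  moreover have "gap t * (f i (omega_avg t) - f i (\<omega>b t)) \<le> - (\<mu> * M i) * (gap t)\<^sup>2"
    using f_one_sided_bound[of i "omega_avg t" "\<omega>b t"] by (simp add: gap_def mult.commute)
  ultimately show ?thesis
    by (simp add: algebra_simps)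
qed

lemma gap_bound:
  "kappa * (2 * gap t * (omega_avg' t - omega_b' t))
    \<le> kappa * L\<^sup>2 / (\<mu> * Mtot) * (\<Sum>i\<in>UNIV. M i * (dev t i)\<^sup>2) - kappa * \<mu> * (gap t)\<^sup>2"
proof -
  have "omega_avg' t - omega_b' t = (\<Sum>i\<in>UNIV. f i (\<omega> t i) - f i (\<omega>b t)) / Mtot"
    by (simp add: omega_avg'_eq omega_b'_def sum_subtractf flip: diff_divide_distrib)
  then have "2 * gap t * (omega_avg' t - omega_b' t)
      = 2 / Mtot * (\<Sum>i\<in>UNIV. gap t * (f i (\<omega> t i) - f i (\<omega>b t)))"
    by (simp flip: sum_distrib_left)
  also have "\<dots> \<le> 2 / Mtot * (\<Sum>i\<in>UNIV. M i * (L\<^sup>2 / (2 * \<mu>) * (dev t i)\<^sup>2 - \<mu> / 2 * (gap t)\<^sup>2))"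
    using Mtot_pos by (intro mult_left_mono sum_mono gap_node_bound) simp
  also have "(\<Sum>i\<in>UNIV. M i * (L\<^sup>2 / (2 * \<mu>) * (dev t i)\<^sup>2 - \<mu> / 2 * (gap t)\<^sup>2))
      = (\<Sum>i\<in>UNIV. L\<^sup>2 / (2 * \<mu>) * (M i * (dev t i)\<^sup>2) - \<mu> / 2 * (gap t)\<^sup>2 * M i)"
    by (rule sum.cong) (simp_all add: algebra_simps)
  also have "\<dots> = L\<^sup>2 / (2 * \<mu>) * (\<Sum>i\<in>UNIV. M i * (dev t i)\<^sup>2) - \<mu> / 2 * (gap t)\<^sup>2 * Mtot"
    by (simp only: sum_subtractf flip: sum_distrib_left Mtot_def)
  also have "2 / Mtot * \<dots> = L\<^sup>2 / (\<mu> * Mtot) * (\<Sum>i\<in>UNIV. M i * (dev t i)\<^sup>2) - \<mu> * (gap t)\<^sup>2"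
    using Mtot_pos mu_pos by (simp add: field_simps)
  finally have "2 * gap t * (omega_avg' t - omega_b' t)
      \<le> L\<^sup>2 / (\<mu> * Mtot) * (\<Sum>i\<in>UNIV. M i * (dev t i)\<^sup>2) - \<mu> * (gap t)\<^sup>2" .
  from mult_left_mono[OF this, of kappa] kappa_pos show ?thesis
    by (simp add: algebra_simps)
qed

lemma W'_bound:
  assumes "t > 0"
  shows "W' t \<le> - c * W t + F"
proof -
  define a where "a = lap_form (dev t) (dev t)"
  define Z where "Z = (\<Sum>i\<in>UNIV. M i * (z t i)\<^sup>2)"
  have "kappa * L\<^sup>2 / (\<mu> * Mtot) * (\<Sum>i\<in>UNIV. M i * (dev t i)\<^sup>2)
      \<le> kappa * L\<^sup>2 / (\<mu> * Mtot) * (a / lam)"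
    using lam_rayleigh[OF sum_dev[of t]] lam_pos kappa_pos mu_pos Mtot_pos
    by (intro mult_left_mono) (simp_all add: a_def pos_le_divide_eq mult.commute)
  also have "\<dots> = kappa * L\<^sup>2 / (\<mu> * Mtot * lam) * a"
    by simp
  also have "\<dots> \<le> c / 2 * a"
    by (rule mult_right_mono[OF gap_constant]) (simp add: a_def lap_form_nonneg)
  finally have coupling: "kappa * L\<^sup>2 / (\<mu> * Mtot) * (\<Sum>i\<in>UNIV. M i * (dev t i)\<^sup>2) \<le> c / 2 * a" .
  have "c * kappa * (gap t)\<^sup>2 \<le> kappa * \<mu> * (gap t)\<^sup>2"
    using c_le mu_pos kappa_pos by (intro mult_right_mono) auto
  moreover have "- c * W t + F = F - c / 2 * a - c / 2 * Z - c * kappa * (gap t)\<^sup>2"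
    by (simp add: W_def V_def a_def Z_def algebra_simps)
  moreover have "eps / 2 * a = 2 * (c / 2 * a)"
    by (simp add: eps_def)
  ultimately show ?thesis
    using V'_bound[OF assms] gap_bound[of t] coupling unfolding W'_def a_def Z_def by linarith
qed

definition W0 :: real where
  "W0 = (\<Sum>i\<in>UNIV. (\<xi>0p i - \<xi>0m i)\<^sup>2 / (2 * M i))"

lemma omega_0_const: "\<omega> 0 i = \<omega> 0 j"
  using E_conn[of i j] by (induction rule: rtranclp_induct) (auto dest: steady2)

lemma dev_0: "dev 0 i = 0"
proof -
  have "(\<Sum>j\<in>UNIV. M j * \<omega> 0 j) = (\<Sum>j\<in>UNIV. M j * \<omega> 0 i)"
    using omega_0_const by (intro sum.cong) auto
  then have "(\<Sum>j\<in>UNIV. M j * \<omega> 0 j) = Mtot * \<omega> 0 i"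
    by (simp add: Mtot_def sum_distrib_right)
  then show ?thesis
    using Mtot_pos by (simp add: dev_def omega_avg_def)
qed

lemma gap_0: "gap 0 = 0"
  by (simp add: gap_def \<omega>b_init omega_avg_def Mtot_def)

lemma W_tendsto: "(W \<longlongrightarrow> W0) (at_right 0)"
proof -
  have \<omega>: "((\<lambda>t. \<omega> t i) \<longlongrightarrow> \<omega> 0 i) (at_right 0)"
    and \<theta>: "((\<lambda>t. \<theta> t i) \<longlongrightarrow> \<theta> 0 i) (at_right 0)" for i
    using tendsto_at_right_of_continuous_on[OF \<omega>_cont] tendsto_at_right_of_continuous_on[OF \<theta>_cont]
    by simp_all
  have f: "((\<lambda>t. f i (\<omega> t i)) \<longlongrightarrow> f i (\<omega> 0 i)) (at_right 0)" for i
    using isCont_tendsto_compose[OF DERIV_isCont[OF f_deriv] \<omega>] .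
  have "((\<lambda>t. accel t i) \<longlongrightarrow> (f i (\<omega> 0 i) + \<xi>0p i - lap (\<theta> 0) i) / M i) (at_right 0)" for i
    unfolding accel_def lap_def by (intro tendsto_intros f \<xi>0p_lim \<theta> M_nz)
  moreover have "f i (\<omega> 0 i) + \<xi>0p i - lap (\<theta> 0) i = \<xi>0p i - \<xi>0m i" for i
    using steady1[of i] by (simp add: lap_def)
  ultimately have accel: "((\<lambda>t. accel t i) \<longlongrightarrow> (\<xi>0p i - \<xi>0m i) / M i) (at_right 0)" for i
    by simp
  have avg: "(omega_avg \<longlongrightarrow> omega_avg 0) (at_right 0)"
    unfolding omega_avg_def[abs_def] using Mtot_pos by (intro tendsto_intros \<omega>) simp
  have dev: "((\<lambda>t. dev t i) \<longlongrightarrow> 0) (at_right 0)" for i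
    using tendsto_diff[OF \<omega>[of i] avg] dev_0[of i] by (simp add: dev_def)
  have "(gap \<longlongrightarrow> 0) (at_right 0)"
    using tendsto_diff[OF avg tendsto_at_right_of_continuous_on[OF \<omega>b_cont]] gap_0
    by (simp add: gap_def[abs_def])
  moreover have "((\<lambda>t. z t i) \<longlongrightarrow> (\<xi>0p i - \<xi>0m i) / M i) (at_right 0)" for i
    using tendsto_add[OF accel tendsto_mult[OF tendsto_const dev]] by (simp add: z_def[abs_def])
  moreover have "((\<lambda>t. lap_form (dev t) (dev t)) \<longlongrightarrow> lap_form (\<lambda>_. 0) (\<lambda>_. 0)) (at_right 0)"
    unfolding lap_form_def lap_def by (intro tendsto_intros dev)
  ultimately have "(W \<longlongrightarrow> lap_form (\<lambda>_. 0) (\<lambda>_. 0) / 2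
      + (\<Sum>i\<in>UNIV. M i * ((\<xi>0p i - \<xi>0m i) / M i)\<^sup>2) / 2 + kappa * 0\<^sup>2) (at_right 0)"
    unfolding W_def[abs_def] V_def[abs_def] by (intro tendsto_intros) simp_all
  moreover have "M i * ((\<xi>0p i - \<xi>0m i) / M i)\<^sup>2 / 2 = (\<xi>0p i - \<xi>0m i)\<^sup>2 / (2 * M i)" for i
    using M_nz[of i] by (simp add: power2_eq_square field_simps)
  ultimately show ?thesis
    by (simp add: W0_def lap_form_def lap_const sum_divide_distrib)
qed

lemma W_bound: "t > 0 \<Longrightarrow> W t \<le> W0 * exp (- c * t) + F / c"
  by (rule differential_inequality_exp_bound[OF c_pos F_nonneg DERIV_W W'_bound W_tendsto])

definition Mmin :: real where
  "Mmin = Min (range M)"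

definition rho :: real where
  "rho = Mmin / Mtot"

lemma Mmin_le: "Mmin \<le> M i"
  unfolding Mmin_def by (rule Min_le) auto

lemma Mmin_in_range: "Mmin \<in> range M"
  unfolding Mmin_def by (rule Min_in) auto

lemma Mmin_pos: "Mmin > 0"
  using Mmin_in_range M_pos by auto

lemma rho_pos: "rho > 0" and rho_less_1: "rho < 1"
proof -
  obtain i where i: "Mmin = M i"
    using Mmin_in_range by auto
  have "UNIV - {i} \<noteq> {}"
  proof
    assume "UNIV - {i} = {}"
    then have "CARD('n) = card {i}"
      by (metis Diff_eq_empty_iff subset_singletonD UNIV_not_empty)
    with N2 show False by simp
  qed
  then have "(\<Sum>j\<in>UNIV - {i}. M j) > 0"
    using M_pos by (intro sum_pos) auto
  moreover have "Mtot = M i + (\<Sum>j\<in>UNIV - {i}. M j)"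
    by (simp add: Mtot_def sum.remove)
  ultimately show "rho < 1" "rho > 0"
    using i Mmin_pos Mtot_pos by (simp_all add: rho_def)
qed

lemma dev_sq_le: "(dev t i)\<^sup>2 \<le> (1 - rho) / (Mmin * lam) * lap_form (dev t) (dev t)"
proof -
  define E2 where "E2 = (\<Sum>j\<in>UNIV. M j * (dev t j)\<^sup>2)"
  have "(dev t i)\<^sup>2 \<le> (1 / M i - 1 / Mtot) * E2"
    unfolding E2_def Mtot_def by (rule zero_weighted_sum_component_bound[OF M_pos sum_dev])
  also have "\<dots> \<le> (1 / Mmin - 1 / Mtot) * E2"
    using Mmin_le[of i] Mmin_pos M_pos
    by (intro mult_right_mono) (simp_all add: frac_le E2_def sum_nonneg less_imp_le)
  also have "\<dots> = (1 - rho) / Mmin * E2"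
    using Mmin_pos Mtot_pos by (simp add: rho_def field_simps)
  also have "\<dots> \<le> (1 - rho) / Mmin * (lap_form (dev t) (dev t) / lam)"
    using lam_rayleigh[OF sum_dev[of t]] lam_pos Mmin_pos rho_less_1
    by (intro mult_left_mono) (simp_all add: E2_def pos_le_divide_eq mult.commute)
  finally show ?thesis by simp
qed

text \<open>Splitting \<open>\<omega>\<^sub>i - \<omega>\<^sub>b = dev\<^sub>i + gap\<close> with weights \<open>a, b\<close> satisfying \<open>(a - 1)(b - 1) = 1\<close>
  chosen so that both parts are controlled by the same multiple of \<open>W\<close>.\<close>

lemma deviation_le_W:
  "(\<omega> t i - \<omega>b t)\<^sup>2 \<le> 2 * (1 + Q * rho) / (Mmin * lam) * W t"
proof -
  define P where "P = 1 + Q * rho"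
  define a where "a = P / (1 - rho)"
  define b where "b = P / ((Q + 1) * rho)"
  have pos: "0 < rho" "rho < 1" "Q \<ge> 0" "Mmin > 0" "lam > 0" "Mtot > 0"
    using rho_pos rho_less_1 Q_nonneg Mmin_pos lam_pos Mtot_pos by simp_all
  then have "a > 1" "(a - 1) * (b - 1) = 1"
    using conjugate_weights[of rho Q] by (simp_all add: a_def b_def P_def)
  then have "(\<omega> t i - \<omega>b t)\<^sup>2 \<le> a * (dev t i)\<^sup>2 + b * (gap t)\<^sup>2"
    using square_sum_le_weighted[of a b "dev t i" "gap t"] by (simp add: dev_def gap_def)
  also have "a * (dev t i)\<^sup>2 \<le> P / (Mmin * lam) * lap_form (dev t) (dev t)"
    using mult_left_mono[OF dev_sq_le, of a] \<open>a > 1\<close> pos by (simp add: a_def)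
  also have "b = 2 * P / (Mmin * lam) * kappa"
  proof -
    define q where "q = Q + 1"
    have "q > 0" and X: "(Q + 1) * rho = q * Mmin / Mtot" and kappa: "kappa = Mtot * lam / (2 * q)"
      using pos by (simp_all add: q_def kappa_def rho_def)
    show ?thesis
      unfolding b_def X kappa using pos \<open>q > 0\<close> by (simp add: field_simps)
  qed
  also have "P / (Mmin * lam) * lap_form (dev t) (dev t) + 2 * P / (Mmin * lam) * kappa * (gap t)\<^sup>2
      \<le> 2 * P / (Mmin * lam) * W t"
  proof -
    have "0 \<le> P / (Mmin * lam) * (\<Sum>i\<in>UNIV. M i * (z t i)\<^sup>2)"
      using pos M_pos by (intro mult_nonneg_nonneg sum_nonneg) (simp_all add: P_def less_imp_le)
    moreover have "2 * P / (Mmin * lam) * W t = P / (Mmin * lam) * lap_form (dev t) (dev t)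
        + 2 * P / (Mmin * lam) * kappa * (gap t)\<^sup>2 + P / (Mmin * lam) * (\<Sum>i\<in>UNIV. M i * (z t i)\<^sup>2)"
      by (simp add: W_def V_def algebra_simps)
    ultimately show ?thesis
      by linarith
  qed
  finally show ?thesis
    by (simp add: P_def)
qed

lemma card_mult_Mmin_le: "real CARD('n) * Mmin \<le> Mtot"
  using sum_mono[of UNIV "\<lambda>_. Mmin" M] Mmin_le by (simp add: Mtot_def)

lemma one_plus_Q_rho_le: "1 + Q * rho \<le> 6 * (1 + L / \<mu>)\<^sup>2 * (1 + 4 * L\<^sup>2 / lam)"
proof -
  define x where "x = L / \<mu>"
  define y where "y = 1 + 4 * L\<^sup>2 / lam"
  have "y \<ge> 1" "x \<ge> 0"
    using lam_pos L_pos mu_pos by (simp_all add: x_def y_def)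
  have "Q * rho = 16 / 3 * x\<^sup>2 * y * (real CARD('n) * Mmin / Mtot)"
    using mu_pos Mtot_pos by (simp add: Q_def rho_def x_def y_def power_divide field_simps)
  also have "\<dots> \<le> 16 / 3 * x\<^sup>2 * y"
    using card_mult_Mmin_le Mtot_pos \<open>y \<ge> 1\<close> by (intro mult_left_le) simp_all
  also have "\<dots> \<le> (6 * (1 + x)\<^sup>2 - 1) * y"
    using \<open>x \<ge> 0\<close> \<open>y \<ge> 1\<close> by (intro mult_right_mono) (simp_all add: power2_eq_square algebra_simps)
  finally show ?thesis
    using \<open>y \<ge> 1\<close> by (simp add: x_def y_def algebra_simps)
qed

definition phi1 :: real where
  "phi1 = 1 / Min (range (\<lambda>i. (M i)\<^sup>2))"

definition phi2 :: real where
  "phi2 = 16 * L\<^sup>2 / (3 * \<mu>\<^sup>2 * (Mtot / real CARD('n)) * Mmin)"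

definition alpha_star :: real where
  "alpha_star = ((phi1 + phi2) * lam + 4 * phi2 * L\<^sup>2) / lam\<^sup>2"

definition K :: real where
  "K = 32 * real CARD('n) * (Mtot / real CARD('n)) * (1 + L / \<mu>)\<^sup>2 / (Mmin * \<mu>\<^sup>2)"

lemma phi1_eq: "phi1 = 1 / Mmin\<^sup>2"
proof -
  have "Min (range (\<lambda>i. (M i)\<^sup>2)) = Mmin\<^sup>2"
  proof (rule Min_eqI)
    show "y \<in> range (\<lambda>i. (M i)\<^sup>2) \<Longrightarrow> Mmin\<^sup>2 \<le> y" for y
      using Mmin_le Mmin_pos by (auto intro: power_mono)
    show "Mmin\<^sup>2 \<in> range (\<lambda>i. (M i)\<^sup>2)"
      using Mmin_in_range by auto
  qed simp
  then show ?thesis by (simp add: phi1_def)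
qed

lemma initial_term_bound:
  "2 * (1 + Q * rho) / (Mmin * lam) * W0 \<le> alpha_star * (\<Sum>i\<in>UNIV. (\<xi>0p i - \<xi>0m i)\<^sup>2)"
proof -
  have "W0 \<le> (\<Sum>i\<in>UNIV. (\<xi>0p i - \<xi>0m i)\<^sup>2 / (2 * Mmin))"
    unfolding W0_def using Mmin_le Mmin_pos M_pos by (intro sum_mono divide_left_mono) (auto intro: mult_pos_pos)
  then have "2 * (1 + Q * rho) / (Mmin * lam) * W0
      \<le> 2 * (1 + Q * rho) / (Mmin * lam) * ((\<Sum>i\<in>UNIV. (\<xi>0p i - \<xi>0m i)\<^sup>2) / (2 * Mmin))"
    using Q_nonneg rho_pos Mmin_pos lam_pos by (intro mult_left_mono) (simp_all add: sum_divide_distrib)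
  also have "\<dots> = alpha_star * (\<Sum>i\<in>UNIV. (\<xi>0p i - \<xi>0m i)\<^sup>2)"
    using Mmin_pos lam_pos Mtot_pos mu_pos
    by (simp add: alpha_star_def phi1_eq phi2_def Q_def rho_def power2_eq_square field_simps)
  finally show ?thesis .
qed

lemma forcing_term_bound:
  "2 * (1 + Q * rho) / (Mmin * lam) * (F / c) \<le> K * Cmax\<^sup>2 * (lam + 4 * L\<^sup>2)\<^sup>2 / lam ^ 3"
proof -
  define D where "D = lam + 4 * L\<^sup>2"
  define R where "R = Mtot * Cmax\<^sup>2 * D / (\<mu>\<^sup>2 * Mmin * lam\<^sup>2)"
  have pos: "D > 0" "R \<ge> 0"
    using lam_pos Mtot_pos mu_pos Mmin_pos by (simp_all add: D_def R_def add_pos_nonneg)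
  have "2 * (1 + Q * rho) / (Mmin * lam) * (F / c) = 16 / 3 * (1 + Q * rho) * R"
    using Mmin_pos lam_pos mu_pos pos
    by (simp add: F_def c_def R_def flip: D_def) (simp add: field_simps power2_eq_square)
  also have "\<dots> \<le> 16 / 3 * (6 * (1 + L / \<mu>)\<^sup>2 * (D / lam)) * R"
    using one_plus_Q_rho_le lam_pos pos
    by (intro mult_right_mono mult_left_mono) (simp_all add: D_def field_simps)
  also have "\<dots> = K * Cmax\<^sup>2 * D\<^sup>2 / lam ^ 3"
    using Mmin_pos lam_pos mu_pos
    by (simp add: K_def R_def power2_eq_square power3_eq_cube field_simps)
  finally show ?thesis
    by (simp add: D_def)
qed

lemma frequency_deviation_bound:
  assumes "t > 0"
  shows "(\<omega> t i - \<omega>b t)\<^sup>2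
    \<le> alpha_star * (\<Sum>i\<in>UNIV. (\<xi>0p i - \<xi>0m i)\<^sup>2) * exp (- c * t) + K * Cmax\<^sup>2 * (lam + 4 * L\<^sup>2)\<^sup>2 / lam ^ 3"
proof -
  define G where "G = 2 * (1 + Q * rho) / (Mmin * lam)"
  have "G \<ge> 0"
    using Q_nonneg rho_pos Mmin_pos lam_pos by (simp add: G_def)
  have "(\<omega> t i - \<omega>b t)\<^sup>2 \<le> G * W t"
    unfolding G_def by (rule deviation_le_W)
  also have "\<dots> \<le> G * W0 * exp (- c * t) + G * (F / c)"
    using mult_left_mono[OF W_bound[OF assms] \<open>G \<ge> 0\<close>] by (simp add: algebra_simps)
  also have "\<dots> \<le> alpha_star * (\<Sum>i\<in>UNIV. (\<xi>0p i - \<xi>0m i)\<^sup>2) * exp (- c * t)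
      + K * Cmax\<^sup>2 * (lam + 4 * L\<^sup>2)\<^sup>2 / lam ^ 3"
    using initial_term_bound forcing_term_bound unfolding G_def
    by (intro add_mono mult_right_mono) simp_all
  finally show ?thesis .
qed

end

theorem proposition5p2:
  fixes E :: "'n::finite \<Rightarrow> 'n \<Rightarrow> bool"
    and B :: "'n \<Rightarrow> 'n \<Rightarrow> real"
    and M :: "'n \<Rightarrow> real"
    and f f' :: "'n \<Rightarrow> real \<Rightarrow> real"
    and \<xi> \<xi>' :: "real \<Rightarrow> 'n \<Rightarrow> real"
    and \<xi>0m \<xi>0p :: "'n \<Rightarrow> real"
    and \<theta> \<omega> :: "real \<Rightarrow> 'n \<Rightarrow> real"
    and \<omega>b :: "real \<Rightarrow> real"
    and \<mu> L :: real
  assumes N2: "CARD('n) \<ge> 2"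
    and E_sym: "\<And>i j. E i j \<Longrightarrow> E j i"
    and E_irrefl: "\<And>i. \<not> E i i"
    and E_conn: "\<And>i j. E\<^sup>*\<^sup>* i j"
    and B_sym: "\<And>i j. B i j = B j i"
    and B_pos: "\<And>i j. E i j \<Longrightarrow> B i j > 0"
    and M_pos: "\<And>i. M i > 0"
    and f0: "\<And>i. f i 0 = 0"
    and f_deriv: "\<And>i w. (f i has_real_derivative f' i w) (at w)"
    and f'_cont: "\<And>i. continuous_on UNIV (f' i)"
    and mu_pos: "\<mu> > 0" and L_pos: "L > 0"
    and f'_bounds: "\<And>i w. - L \<le> f' i w / M i \<and> f' i w / M i \<le> - \<mu>"
    and \<xi>_deriv: "\<And>i t. t > 0 \<Longrightarrow> ((\<lambda>s. \<xi> s i) has_real_derivative \<xi>' t i) (at t)"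
    and \<xi>'_cont: "\<And>i. continuous_on {0<..} (\<lambda>t. \<xi>' t i)"
    and \<xi>0p_lim: "\<And>i. ((\<lambda>t. \<xi> t i) \<longlongrightarrow> \<xi>0p i) (at_right 0)"
    and \<theta>_cont: "\<And>i. continuous_on {0..} (\<lambda>t. \<theta> t i)"
    and \<omega>_cont: "\<And>i. continuous_on {0..} (\<lambda>t. \<omega> t i)"
    and \<theta>_ode: "\<And>i t. t > 0 \<Longrightarrow> ((\<lambda>s. \<theta> s i) has_real_derivative \<omega> t i) (at t)"
    and \<omega>_ode: "\<And>i t. t > 0 \<Longrightarrow> ((\<lambda>s. \<omega> s i) has_real_derivative
        (f i (\<omega> t i) + \<xi> t i - (\<Sum>j\<in>{j. E i j}. B i j * (\<theta> t i - \<theta> t j))) / M i) (at t)"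
    and \<omega>b_cont: "continuous_on {0..} \<omega>b"
    and \<omega>b_ode: "\<And>t. t > 0 \<Longrightarrow> (\<omega>b has_real_derivative
        ((\<Sum>i\<in>UNIV. f i (\<omega>b t)) / real CARD('n) + (\<Sum>i\<in>UNIV. \<xi> t i) / real CARD('n))
          / ((\<Sum>i\<in>UNIV. M i) / real CARD('n))) (at t)"
    and \<omega>b_init: "\<omega>b 0 = (\<Sum>i\<in>UNIV. M i * \<omega> 0 i) / (\<Sum>i\<in>UNIV. M i)"
    and steady1: "\<And>i. 0 = f i (\<omega> 0 i) + \<xi>0m i - (\<Sum>j\<in>{j. E i j}. B i j * (\<theta> 0 i - \<theta> 0 j))"
    and steady2: "\<And>i j. E i j \<Longrightarrow> 0 = \<omega> 0 i - \<omega> 0 j"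
    and C_finite: "\<And>i. bdd_above ((\<lambda>t. \<bar>\<xi>' t i\<bar> / M i) ` {0<..})"
  shows "\<forall>t>0.
    (let N = real CARD('n);
         Mb = (\<Sum>i\<in>UNIV. M i) / N;
         Mmin = Min (range M);
         lam2 = lambda2 M E B;
         K = 32 * N * Mb * (1 + L / \<mu>)^2 / (Mmin * \<mu>^2);
         c = \<mu> * lam2 / (4 * (lam2 + 4 * L^2));
         C = Max (range (\<lambda>i. Sup ((\<lambda>s. \<bar>\<xi>' s i\<bar> / M i) ` {0<..})));
         phi1 = 1 / Min (range (\<lambda>i. (M i)^2));
         phi2 = 16 * L^2 / (3 * \<mu>^2 * Mb * Mmin);
         alpha = ((phi1 + phi2) * lam2 + 4 * phi2 * L^2) / lam2^2;
         d\<xi>sq = (\<Sum>i\<in>UNIV. (\<xi>0p i - \<xi>0m i)^2)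
     in Max (range (\<lambda>i. \<bar>\<omega> t i - \<omega>b t\<bar>^2))
          \<le> alpha * d\<xi>sq * exp (- c * t) + K * C^2 * (lam2 + 4 * L^2)^2 / lam2^3)"
proof -
  interpret power_network E B M f f' \<xi> \<xi>' \<xi>0m \<xi>0p \<theta> \<omega> \<omega>b \<mu> L
    by unfold_locales (fact assms)+
  show ?thesis
    unfolding Let_def Mtot_def[symmetric] Mmin_def[symmetric] lam_def[symmetric] Cmax_def[symmetric]
      phi1_def[symmetric] phi2_def[symmetric] alpha_star_def[symmetric] K_def[symmetric]
      c_def[symmetric]
    using frequency_deviation_bound by (auto intro!: Max.boundedI)
qed

end
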